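(* Let $k\in\mathbb{N}$ and let $G$ be a graph on $n\geq k(k+1)$ vertices with $\delta:=\delta(G)\geq\frac{(k-1)n}{k}$. Then $G$ contains $\min\left\{k\delta-(k-1)n,\left\lfloor\frac{n}{k+1}\right\rfloor\right\}$ vertex-disjoint copies of $K_{k+1}$. *)

theory Defs
  imports Complex_Main
begin

definition simple_graph :: "'a set \<Rightarrow> ('a \<Rightarrow> 'a \<Rightarrow> bool) \<Rightarrow> bool" where
  "simple_graph V E \<longleftrightarrow> finite V \<and> (\<forall>u v. E u v \<longrightarrow> u \<in> V \<and> v \<in> V)
     \<and> (\<forall>u v. E u v \<longrightarrow> E v u) \<and> (\<forall>v. \<not> E v v)"

definition degree :: "'a set \<Rightarrow> ('a \<Rightarrow> 'a \<Rightarrow> bool) \<Rightarrow> 'a \<Rightarrow> nat" where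
  "degree V E v = card {u \<in> V. E v u}"

definition min_degree :: "'a set \<Rightarrow> ('a \<Rightarrow> 'a \<Rightarrow> bool) \<Rightarrow> nat" where
  "min_degree V E = Min (degree V E ` V)"

definition is_clique_copy :: "'a set \<Rightarrow> ('a \<Rightarrow> 'a \<Rightarrow> bool) \<Rightarrow> nat \<Rightarrow> 'a set \<Rightarrow> bool" where
  "is_clique_copy V E r S \<longleftrightarrow> S \<subseteq> V \<and> card S = r \<and> (\<forall>u\<in>S. \<forall>v\<in>S. u \<noteq> v \<longrightarrow> E u v)"

end

theory Submission
  imports Defs
begin

text \<open>Every vertex has fewer than \<open>D = n - \<delta>\<close> non-neighbours,
  so by the Hajnal-Szemeredi theorem the complement of \<open>G\<close> has a proper colouring with \<open>D\<close>
  classes of at most \<open>k + 1\<close> vertices each. The classes are cliques of \<open>G\<close>, and counting shows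
  that at least \<open>n - k D = k \<delta> - (k - 1) n\<close> of them have exactly \<open>k + 1\<close> vertices. If this
  exceeds \<open>\<lfloor>n / (k + 1)\<rfloor>\<close>, then \<open>D \<le> \<lfloor>n / (k + 1)\<rfloor>\<close>, and the same argument applied to
  \<open>(k + 1) \<lfloor>n / (k + 1)\<rfloor>\<close> of the vertices gives \<open>\<lfloor>n / (k + 1)\<rfloor>\<close> cliques.

  The Hajnal-Szemeredi theorem is proved as by Kierstead and Kostochka, by induction on the
  number of vertices and, inside it, on the number of edges. Reinserting an edge yields a nearly
  equitable colouring. A vertex is moved along a path of the digraph whose arcs join two classes
  when some vertex of the first has no neighbour in the second; if the large class cannot reach
  the small one, a terminal accessible class and its solo neighbours either allow an exchange that
  finishes the colouring or enlarges the accessible part, or a weighted count gives a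
  contradiction.\<close>

section \<open>Colour classes and recolouring\<close>

lemma simple_graph_finite: "simple_graph V E \<Longrightarrow> finite V"
  unfolding simple_graph_def by blast

lemma simple_graph_adj_in: "simple_graph V E \<Longrightarrow> E u v \<Longrightarrow> u \<in> V \<and> v \<in> V"
  unfolding simple_graph_def by blast

lemma simple_graph_sym: "simple_graph V E \<Longrightarrow> E u v \<Longrightarrow> E v u"
  unfolding simple_graph_def by blast

lemma simple_graph_irrefl: "simple_graph V E \<Longrightarrow> \<not> E v v"
  unfolding simple_graph_def by blast

definition color_class :: "'a set \<Rightarrow> ('a \<Rightarrow> nat) \<Rightarrow> nat \<Rightarrow> 'a set" where
  "color_class V f i = {v \<in> V. f v = i}"

definition proper_coloring :: "('a \<Rightarrow> 'a \<Rightarrow> bool) \<Rightarrow> ('a \<Rightarrow> nat) \<Rightarrow> bool" where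
  "proper_coloring E f \<longleftrightarrow> (\<forall>u v. E u v \<longrightarrow> f u \<noteq> f v)"

definition equitable_coloring ::
    "'a set \<Rightarrow> ('a \<Rightarrow> 'a \<Rightarrow> bool) \<Rightarrow> nat \<Rightarrow> nat \<Rightarrow> ('a \<Rightarrow> nat) \<Rightarrow> bool" where
  "equitable_coloring V E s m f \<longleftrightarrow>
     (\<forall>v\<in>V. f v < s) \<and> proper_coloring E f \<and> (\<forall>i<s. card (color_class V f i) = m)"

text \<open>Class \<open>lo\<close> is one vertex short and class \<open>hi\<close> one vertex over; the sizes are compared
  additively to avoid truncated subtraction.\<close>
definition nearly_equitable ::
    "'a set \<Rightarrow> ('a \<Rightarrow> 'a \<Rightarrow> bool) \<Rightarrow> nat \<Rightarrow> nat \<Rightarrow> ('a \<Rightarrow> nat) \<Rightarrow> nat \<Rightarrow> nat \<Rightarrow> bool" where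
  "nearly_equitable V E s m f lo hi \<longleftrightarrow>
     (\<forall>v\<in>V. f v < s) \<and> proper_coloring E f \<and> lo < s \<and> hi < s \<and> lo \<noteq> hi \<and>
     (\<forall>i<s. card (color_class V f i) + of_bool (i = lo) = m + of_bool (i = hi))"

definition movable :: "'a set \<Rightarrow> ('a \<Rightarrow> 'a \<Rightarrow> bool) \<Rightarrow> ('a \<Rightarrow> nat) \<Rightarrow> 'a \<Rightarrow> nat \<Rightarrow> bool" where
  "movable V E f x j \<longleftrightarrow> (\<forall>u \<in> color_class V f j. \<not> E x u)"

definition class_arc :: "'a set \<Rightarrow> ('a \<Rightarrow> 'a \<Rightarrow> bool) \<Rightarrow> ('a \<Rightarrow> nat) \<Rightarrow> nat \<Rightarrow> nat \<Rightarrow> bool" where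
  "class_arc V E f i j \<longleftrightarrow> i \<noteq> j \<and> (\<exists>x \<in> color_class V f i. movable V E f x j)"

lemma finite_color_class: "finite V \<Longrightarrow> finite (color_class V f i)"
  unfolding color_class_def by simp

lemma card_colored_in:
  assumes "finite V" "finite X"
  shows "card {v \<in> V. f v \<in> X} = (\<Sum>i\<in>X. card (color_class V f i))"
proof -
  have "{v \<in> V. f v \<in> X} = (\<Union>i\<in>X. color_class V f i)"
    unfolding color_class_def by auto
  also have "card \<dots> = (\<Sum>i\<in>X. card (color_class V f i))"
    using assms by (intro card_UN_disjoint) (auto simp: color_class_def)
  finally show ?thesis .
qed

lemma color_class_upd:
  assumes "x \<in> V" "f x = c" "c \<noteq> c'"
  shows "color_class V (f(x := c')) i =
    (if i = c then color_class V f i - {x}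
     else if i = c' then insert x (color_class V f i) else color_class V f i)"
  using assms unfolding color_class_def by auto

lemma card_color_class_upd:
  assumes "finite V" "x \<in> V" "f x = c" "c \<noteq> c'"
  shows "card (color_class V (f(x := c')) i) + of_bool (i = c) =
    card (color_class V f i) + of_bool (i = c')"
proof -
  have "x \<in> color_class V f c" "x \<notin> color_class V f c'"
    using assms unfolding color_class_def by auto
  moreover have "card (color_class V f c) > 0"
    using \<open>x \<in> color_class V f c\<close> finite_color_class[OF assms(1)] card_gt_0_iff by blast
  ultimately show ?thesis
    using color_class_upd[where f = f, OF assms(2-4), of i] finite_color_class[OF assms(1), of f]
    by (auto simp: card_Suc_Diff1)
qed

lemma proper_coloring_upd:
  assumes "simple_graph V E" "proper_coloring E f" "movable V E f x j"
  shows "proper_coloring E (f(x := j))"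
  using assms unfolding simple_graph_def proper_coloring_def movable_def color_class_def
  by (metis (mono_tags, lifting) fun_upd_apply mem_Collect_eq)

lemma class_arc_transfer:
  assumes "class_arc V E f i j" "color_class V f i \<subseteq> color_class V g i"
    "color_class V g j = color_class V f j"
  shows "class_arc V E g i j"
  using assms unfolding class_arc_def movable_def by auto

lemma successively_class_arc_transfer:
  assumes "successively (class_arc V E f) (c # cs)" "color_class V f c \<subseteq> color_class V g c"
    "\<forall>i\<in>set cs. color_class V g i = color_class V f i"
  shows "successively (class_arc V E g) (c # cs)"
  using assms
proof (induction cs arbitrary: c)
  case (Cons c' cs)
  then show ?case using class_arc_transfer[of V E f c c' g] by auto
qed simp

lemma rtranclp_imp_distinct_path:
  assumes "R\<^sup>*\<^sup>* i j"
  shows "\<exists>ps. distinct (i # ps) \<and> last (i # ps) = j \<and> successively R (i # ps)"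
  using assms
proof (induction rule: converse_rtranclp_induct)
  case base
  show ?case by (intro exI[of _ "[]"]) auto
next
  case (step i i')
  then obtain ps where ps: "distinct (i' # ps)" "last (i' # ps) = j" "successively R (i' # ps)"
    by blast
  show ?case
  proof (cases "i \<in> set (i' # ps)")
    case False
    then show ?thesis using ps step(1) by (intro exI[of _ "i' # ps"]) auto
  next
    case True
    then obtain us vs where "i' # ps = us @ i # vs" by (meson split_list)
    then show ?thesis using ps
      by (metis distinct_append last_appendR list.distinct(1) successively_append_iff)
  qed
qed

text \<open>Distinctness of the path keeps the classes further along it untouched by each move, so their
  arcs survive.\<close>
lemma shift_along_path:
  assumes G: "simple_graph V E" and "proper_coloring E f"
    and "successively (class_arc V E f) (c # cs)" "distinct (c # cs)"
  shows "\<exists>g. proper_coloring E g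
     \<and> (\<forall>v. f v \<notin> set (c # cs) \<longrightarrow> g v = f v)
     \<and> (\<forall>v. f v \<in> set (c # cs) \<longrightarrow> g v \<in> set (c # cs))
     \<and> (\<forall>i. card (color_class V g i) + of_bool (i = c) =
            card (color_class V f i) + of_bool (i = last (c # cs)))"
  using assms(2-)
proof (induction cs arbitrary: c f)
  case Nil
  then show ?case by (intro exI[of _ f]) auto
next
  case (Cons c' cs)
  obtain x where x: "x \<in> color_class V f c" "movable V E f x c'" and "c \<noteq> c'"
    using Cons.prems(2) unfolding class_arc_def by auto
  then have xV: "x \<in> V" "f x = c" unfolding color_class_def by auto
  define f1 where "f1 = f(x := c')"
  have "proper_coloring E f1"
    unfolding f1_def using proper_coloring_upd[OF G Cons.prems(1) x(2)] .
  moreover have "successively (class_arc V E f1) (c' # cs)"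
  proof (rule successively_class_arc_transfer)
    show "successively (class_arc V E f) (c' # cs)" using Cons.prems(2) by simp
    have "color_class V f1 i = color_class V f i" if "i \<noteq> c" "i \<noteq> c'" for i
      using that color_class_upd[where f = f, OF xV \<open>c \<noteq> c'\<close>, of i] by (simp add: f1_def)
    moreover have "i \<noteq> c \<and> i \<noteq> c'" if "i \<in> set cs" for i using that Cons.prems(3) by auto
    ultimately show "\<forall>i\<in>set cs. color_class V f1 i = color_class V f i" by blast
    show "color_class V f c' \<subseteq> color_class V f1 c'"
      using color_class_upd[where f = f, OF xV \<open>c \<noteq> c'\<close>, of c'] \<open>c \<noteq> c'\<close> by (auto simp: f1_def)
  qed
  moreover have "distinct (c' # cs)" using Cons.prems(3) by simp
  ultimately obtain g where g: "proper_coloring E g"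
    "\<forall>v. f1 v \<notin> set (c' # cs) \<longrightarrow> g v = f1 v" "\<forall>v. f1 v \<in> set (c' # cs) \<longrightarrow> g v \<in> set (c' # cs)"
    "\<forall>i. card (color_class V g i) + of_bool (i = c') =
       card (color_class V f1 i) + of_bool (i = last (c' # cs))"
    using Cons.IH by blast
  have "card (color_class V g i) + of_bool (i = c) =
      card (color_class V f i) + of_bool (i = last (c # c' # cs))" for i
    using g(4)[rule_format, of i]
      card_color_class_upd[where f = f, OF simple_graph_finite[OF G] xV \<open>c \<noteq> c'\<close>, of i]
    unfolding f1_def by simp
  moreover have "g v = f v" if "f v \<notin> set (c # c' # cs)" for v
  proof -
    have "f1 v = f v" using that xV by (auto simp: f1_def)
    then show ?thesis using g(2) that by simp
  qed
  moreover have "g v \<in> set (c # c' # cs)" if "f v \<in> set (c # c' # cs)" for v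
    using g(2,3) that xV unfolding f1_def by (cases "v = x") auto
  ultimately show ?case using g(1) by blast
qed

section \<open>Reachability inside a set\<close>

definition rel_within :: "('b \<Rightarrow> 'b \<Rightarrow> bool) \<Rightarrow> 'b set \<Rightarrow> 'b \<Rightarrow> 'b \<Rightarrow> bool" where
  "rel_within R S x y \<longleftrightarrow> x \<in> S \<and> y \<in> S \<and> R x y"

lemma rtranclp_rel_within_mono:
  assumes "S \<subseteq> T" "(rel_within R S)\<^sup>*\<^sup>* x y"
  shows "(rel_within R T)\<^sup>*\<^sup>* x y"
proof -
  have "rel_within R S \<le> rel_within R T" using assms(1) unfolding rel_within_def by auto
  then show ?thesis using assms(2) rtranclp_mono by blast
qed

lemma successively_rel_within_set:
  "successively (rel_within R S) (x # xs) \<Longrightarrow> set xs \<subseteq> S"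
  by (induction xs arbitrary: x) (auto simp: rel_within_def)

lemma rtranclp_rel_within_class_arc_transfer:
  assumes "(rel_within (class_arc V E f) S)\<^sup>*\<^sup>* i j" "\<forall>k\<in>S. color_class V g k = color_class V f k"
  shows "(rel_within (class_arc V E g) S)\<^sup>*\<^sup>* i j"
proof -
  have "rel_within (class_arc V E f) S \<le> rel_within (class_arc V E g) S"
    using assms(2) class_arc_transfer[of V E f _ _ g] unfolding rel_within_def by fastforce
  then show ?thesis using assms(1) rtranclp_mono by blast
qed

lemma relpowp_rel_within_through:
  assumes "(rel_within R S ^^ n) x t" "\<not> (rel_within R (S - {y}))\<^sup>*\<^sup>* x t" "x \<noteq> y"
  shows "\<exists>k<n. (rel_within R S ^^ k) y t"
  using assms
proof (induction n arbitrary: x)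
  case (Suc n)
  obtain x' where x': "rel_within R S x x'" "(rel_within R S ^^ n) x' t"
    using relpowp_Suc_D2[OF Suc.prems(1)] by blast
  show ?case
  proof (cases "x' = y")
    case False
    have "rel_within R (S - {y}) x x'" using x'(1) False Suc.prems(3) unfolding rel_within_def by auto
    then have "\<not> (rel_within R (S - {y}))\<^sup>*\<^sup>* x' t"
      using Suc.prems(2) by (meson converse_rtranclp_into_rtranclp)
    then show ?thesis using Suc.IH[OF x'(2) _ False] less_SucI by blast
  qed (use x'(2) lessI in blast)
qed simp

lemma rtranclp_rel_within_through:
  assumes "(rel_within R S)\<^sup>*\<^sup>* x t" "\<not> (rel_within R (S - {y}))\<^sup>*\<^sup>* x t"
  shows "(rel_within R S)\<^sup>*\<^sup>* y t"
proof (cases "x = y")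
  case False
  obtain n where "(rel_within R S ^^ n) x t" using rtranclp_imp_relpowp[OF assms(1)] by blast
  then obtain k where "(rel_within R S ^^ k) y t"
    using relpowp_rel_within_through[OF _ assms(2) False] by blast
  then show ?thesis by (rule relpowp_imp_rtranclp)
qed (use assms(1) in simp)

lemma rtranclp_rel_within_not_mutually_through:
  assumes "(rel_within R S)\<^sup>*\<^sup>* x t" "(rel_within R S)\<^sup>*\<^sup>* y t" "x \<noteq> y"
    "\<not> (rel_within R (S - {y}))\<^sup>*\<^sup>* x t" "\<not> (rel_within R (S - {x}))\<^sup>*\<^sup>* y t"
  shows False
proof -
  define dist where "dist u = (LEAST n. (rel_within R S ^^ n) u t)" for u
  have dist: "(rel_within R S ^^ dist u) u t" if "(rel_within R S)\<^sup>*\<^sup>* u t" for u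
    unfolding dist_def using rtranclp_imp_relpowp[OF that] by (rule LeastI_ex)
  have dist_le: "dist u \<le> k" if "(rel_within R S ^^ k) u t" for u k
    unfolding dist_def using that by (rule Least_le)
  obtain k where "k < dist x" "(rel_within R S ^^ k) y t"
    using relpowp_rel_within_through[OF dist[OF assms(1)] assms(4,3)] by blast
  then have "dist y < dist x" using dist_le by (meson le_less_trans)
  moreover obtain k' where "k' < dist y" "(rel_within R S ^^ k') x t"
    using relpowp_rel_within_through[OF dist[OF assms(2)] assms(5)] assms(3) by blast
  then have "dist x < dist y" using dist_le by (meson le_less_trans)
  ultimately show False by simp
qed

definition cut_off :: "('b \<Rightarrow> 'b \<Rightarrow> bool) \<Rightarrow> 'b set \<Rightarrow> 'b \<Rightarrow> 'b \<Rightarrow> 'b set" where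
  "cut_off R A r w = {u \<in> A - {w}. \<not> (rel_within R (A - {w}))\<^sup>*\<^sup>* u r}"

lemma cut_off_cut_off:
  assumes reach: "\<forall>u\<in>A. (rel_within R A)\<^sup>*\<^sup>* u r" and u: "u \<in> cut_off R A r w"
  shows "insert u (cut_off R A r u) \<subseteq> cut_off R A r w"
proof (intro insert_subsetI u subsetI)
  have uA: "u \<in> A" "u \<noteq> w" and nu: "\<not> (rel_within R (A - {w}))\<^sup>*\<^sup>* u r"
    using u unfolding cut_off_def by auto
  fix x assume x: "x \<in> cut_off R A r u"
  then have xA: "x \<in> A" "x \<noteq> u" and nx: "\<not> (rel_within R (A - {u}))\<^sup>*\<^sup>* x r"
    unfolding cut_off_def by auto
  have "x \<noteq> w"
  proof
    assume "x = w"
    then show False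
      using rtranclp_rel_within_not_mutually_through[of R A u r w] reach uA xA nu nx by blast
  qed
  moreover have "\<not> (rel_within R (A - {w}))\<^sup>*\<^sup>* x r"
  proof
    assume x_reach: "(rel_within R (A - {w}))\<^sup>*\<^sup>* x r"
    show False
    proof (cases "(rel_within R (A - {w} - {u}))\<^sup>*\<^sup>* x r")
      case True
      then show False using nx rtranclp_rel_within_mono[of "A - {w} - {u}" "A - {u}"] by blast
    next
      case False
      then show False using rtranclp_rel_within_through[OF x_reach] nu by blast
    qed
  qed
  ultimately show "x \<in> cut_off R A r w" using xA unfolding cut_off_def by auto
qed

lemma rel_from_cut_off:
  assumes "u \<in> cut_off R A r w" "R u x" "x \<in> A"
  shows "x \<in> insert w (cut_off R A r w)"
proof (rule ccontr)
  assume "x \<notin> insert w (cut_off R A r w)"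
  then have "rel_within R (A - {w}) u x" "(rel_within R (A - {w}))\<^sup>*\<^sup>* x r"
    using assms unfolding cut_off_def rel_within_def by auto
  then have "(rel_within R (A - {w}))\<^sup>*\<^sup>* u r" by (rule converse_rtranclp_into_rtranclp)
  then show False using assms(1) unfolding cut_off_def by simp
qed

text \<open>For a vertex \<open>w\<close> cutting off a minimal nonempty set, all cut-off vertices cut off nothing,
  and their out-neighbours lie in that set or are \<open>w\<close>.\<close>
lemma card_terminal_ge:
  assumes fin: "finite A" and r: "r \<in> A" and reach: "\<forall>u\<in>A. (rel_within R A)\<^sup>*\<^sup>* u r"
    and deg: "\<forall>w\<in>A. cut_off R A r w = {} \<longrightarrow> k \<le> card {x \<in> A - {w}. R w x}"
  shows "k \<le> card {w \<in> A. cut_off R A r w = {}}"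
proof (cases "\<exists>w\<in>A. cut_off R A r w \<noteq> {}")
  case False
  then have "k \<le> card {x \<in> A - {r}. R r x}" using deg r by blast
  also have "\<dots> \<le> card {w \<in> A. cut_off R A r w = {}}"
    using False fin by (intro card_mono) auto
  finally show ?thesis .
next
  case True
  then obtain w where w: "w \<in> A" "cut_off R A r w \<noteq> {}"
    and w_min: "\<And>w'. w' \<in> A \<Longrightarrow> cut_off R A r w' \<noteq> {} \<Longrightarrow>
      card (cut_off R A r w) \<le> card (cut_off R A r w')"
    using ex_has_least_nat[of "\<lambda>w. w \<in> A \<and> cut_off R A r w \<noteq> {}" _ "\<lambda>w. card (cut_off R A r w)"]
    by blast
  have fin_cut: "finite (cut_off R A r w')" for w' using fin unfolding cut_off_def by simp
  have terminal: "cut_off R A r u = {}" if u: "u \<in> cut_off R A r w" for u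
  proof (rule ccontr)
    assume ne: "cut_off R A r u \<noteq> {}"
    have "u \<notin> cut_off R A r u" unfolding cut_off_def by simp
    then have "card (cut_off R A r u) < card (cut_off R A r w)"
      using cut_off_cut_off[OF reach u] fin_cut by (intro psubset_card_mono) auto
    moreover have "u \<in> A" using u unfolding cut_off_def by simp
    ultimately show False using w_min ne by fastforce
  qed
  obtain u where u: "u \<in> cut_off R A r w" using w(2) by blast
  then have uA: "u \<in> A" unfolding cut_off_def by simp
  have "k \<le> card {x \<in> A - {u}. R u x}" using deg uA terminal[OF u] by blast
  also have "\<dots> \<le> card (insert w (cut_off R A r w) - {u})"
    using rel_from_cut_off[OF u] fin_cut by (intro card_mono) auto
  also have "\<dots> = card (cut_off R A r w)"
    using u fin_cut by (simp add: cut_off_def card_insert_if)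
  also have "\<dots> \<le> card {w \<in> A. cut_off R A r w = {}}"
    using terminal fin by (intro card_mono) (auto simp: cut_off_def)
  finally show ?thesis .
qed

lemma ex_unused_color:
  assumes "finite C" "finite N" "card N < card C"
  shows "\<exists>c\<in>C. \<forall>u\<in>N. h u \<noteq> c"
proof -
  have "card (h ` N) < card C" using assms card_image_le le_less_trans by blast
  then have "\<not> C \<subseteq> h ` N" using card_mono[of "h ` N" C] assms(2) by (meson finite_imageI leD)
  then obtain c where "c \<in> C" "c \<notin> h ` N" by blast
  then show ?thesis by (metis imageI)
qed

lemma card_filter_split:
  "finite A \<Longrightarrow> card A = card {x \<in> A. P x} + card {x \<in> A. \<not> P x}"
  by (subst card_Un_disjoint[symmetric]) (auto intro: arg_cong[where f = card])

lemma degree_split: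
  "finite V \<Longrightarrow> degree V E z = card {u \<in> V. E z u \<and> P u} + card {u \<in> V. E z u \<and> \<not> P u}"
  unfolding degree_def using card_filter_split[of "{u \<in> V. E z u}" P] by simp

lemma card_not_movable_le:
  assumes "finite V" "finite X"
  shows "card {i \<in> X. \<not> movable V E f z i} \<le> card {u \<in> V. E z u \<and> f u \<in> X}"
proof -
  have "card {i \<in> X. \<not> movable V E f z i} = (\<Sum>i\<in>X. of_bool (\<not> movable V E f z i))"
    using assms(2) by (simp add: Int_def)
  also have "\<dots> \<le> (\<Sum>i\<in>X. card {u \<in> color_class V f i. E z u})"
  proof (intro sum_mono)
    fix i
    show "of_bool (\<not> movable V E f z i) \<le> card {u \<in> color_class V f i. E z u}"
      using finite_color_class[OF assms(1), of f i]
      by (auto simp: movable_def Suc_le_eq card_gt_0_iff)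
  qed
  also have "\<dots> = card (\<Union>i\<in>X. {u \<in> color_class V f i. E z u})"
    using assms finite_color_class[OF assms(1)]
    by (intro card_UN_disjoint[symmetric]) (auto simp: color_class_def)
  also have "(\<Union>i\<in>X. {u \<in> color_class V f i. E z u}) = {u \<in> V. E z u \<and> f u \<in> X}"
    unfolding color_class_def by auto
  finally show ?thesis .
qed

lemma sum_card_unique_neighbour:
  assumes "finite W" "finite B"
  shows "(\<Sum>z\<in>W. card {y \<in> B. {u \<in> W. E y u} = {z}}) = (\<Sum>y\<in>B. of_bool (card {u \<in> W. E y u} = 1))"
proof -
  have "card {z \<in> W. {u \<in> W. E y u} = {z}} = of_bool (card {u \<in> W. E y u} = 1)" for y
  proof (cases "card {u \<in> W. E y u} = 1")
    case True
    then obtain z where "{u \<in> W. E y u} = {z}" by (meson card_1_singletonE)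
    moreover have "z \<in> W" using calculation by auto
    ultimately have "{z' \<in> W. {u \<in> W. E y u} = {z'}} = {z}" by auto
    then show ?thesis using True by simp
  next
    case False
    then have "{z \<in> W. {u \<in> W. E y u} = {z}} = {}" by auto
    then show ?thesis using False by (subst \<open>{z \<in> W. {u \<in> W. E y u} = {z}} = {}\<close>) simp
  qed
  then show ?thesis by (intro sum_multicount_gen[OF assms]) blast
qed

text \<open>Double counting: each vertex of \<open>B\<close> contributes at least two to the sum over \<open>z \<in> W\<close>
  of the number of neighbours of \<open>z\<close> in \<open>B\<close> plus the number of vertices of \<open>B\<close> whose only
  neighbour in \<open>W\<close> is \<open>z\<close>.\<close>
lemma ex_vertex_many_neighbours:
  assumes fin: "finite W" "finite B" and cW: "card W \<le> m" and cB: "b * m < card B"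
    and sym: "\<And>u v. E u v \<Longrightarrow> E v u"
    and cov: "\<forall>y\<in>B. \<exists>z\<in>W. E y z"
    and solo: "\<forall>z\<in>W. (\<exists>y\<in>B. {u \<in> W. E y u} = {z}) \<longrightarrow> card {y \<in> B. E z y} \<le> b"
  shows "\<exists>z\<in>W. 2 * b + 1 \<le> card {y \<in> B. E z y}"
proof (rule ccontr)
  assume "\<not> ?thesis"
  then have small: "\<forall>z\<in>W. card {y \<in> B. E z y} \<le> 2 * b" by auto
  define N where "N y = {u \<in> W. E y u}" for y
  define S where "S z = {y \<in> B. N y = {z}}" for z
  have "{z \<in> W. E z y} = N y" for y unfolding N_def using sym by blast
  then have sum_N: "(\<Sum>z\<in>W. card {y \<in> B. E z y}) = (\<Sum>y\<in>B. card (N y))"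
    using sum_multicount_gen[OF fin, of "\<lambda>z y. E z y" "\<lambda>y. card (N y)"] by simp
  have "2 \<le> card (N y) + of_bool (card (N y) = 1)" if "y \<in> B" for y
  proof -
    have "card (N y) \<noteq> 0" using cov that fin unfolding N_def by (auto simp: card_eq_0_iff)
    then show ?thesis by (cases "card (N y) = 1") auto
  qed
  then have "(\<Sum>y\<in>B. 2) \<le> (\<Sum>y\<in>B. card (N y) + of_bool (card (N y) = 1))"
    by (intro sum_mono)
  then have "2 * card B \<le> (\<Sum>y\<in>B. card (N y) + of_bool (card (N y) = 1))"
    by (simp add: mult.commute)
  also have "\<dots> = (\<Sum>z\<in>W. card {y \<in> B. E z y} + card (S z))"
    unfolding sum.distrib sum_N S_def N_def sum_card_unique_neighbour[OF fin] ..
  also have "\<dots> \<le> (\<Sum>z\<in>W. 2 * b)"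
  proof (rule sum_mono)
    fix z assume z: "z \<in> W"
    show "card {y \<in> B. E z y} + card (S z) \<le> 2 * b"
    proof (cases "S z = {}")
      case False
      then have "card {y \<in> B. E z y} \<le> b" using solo z unfolding S_def N_def by blast
      moreover have "S z \<subseteq> {y \<in> B. E z y}" unfolding S_def N_def using sym by blast
      then have "card (S z) \<le> card {y \<in> B. E z y}" using fin by (intro card_mono) auto
      ultimately show ?thesis by simp
    qed (use small z in simp)
  qed
  also have "\<dots> \<le> 2 * b * m" using cW by simp
  finally have "card B \<le> b * m" by simp
  then show False using cB by simp
qed

lemma sum_inverse_le_one:
  fixes d :: "'a \<Rightarrow> nat"
  assumes "finite S" "\<forall>y\<in>S. card S \<le> d y + 1"
  shows "(\<Sum>y\<in>S. 1 / real (d y + 1)) \<le> 1"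
proof -
  have "(\<Sum>y\<in>S. 1 / real (d y + 1)) \<le> (\<Sum>y\<in>S. 1 / real (card S))"
  proof (rule sum_mono)
    fix y assume y: "y \<in> S"
    then have "0 < card S" using assms(1) card_gt_0_iff by blast
    moreover have "real (card S) \<le> real (d y + 1)" using assms(2) y by (simp only: of_nat_le_iff)
    ultimately show "1 / real (d y + 1) \<le> 1 / real (card S)" by (intro divide_left_mono) auto
  qed
  also have "\<dots> \<le> 1" by (cases "card S = 0") auto
  finally show ?thesis .
qed

text \<open>Weighted counting: every \<open>y \<in> B\<close> gives weight \<open>1 / (d y + 1)\<close> to each \<open>z\<close> with
  \<open>y \<in> S z\<close>. Every \<open>z\<close> receives total weight at most 1, while every \<open>y\<close> hands out at least
  \<open>t / b\<close>.\<close>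
lemma card_le_by_weights:
  fixes d :: "'a \<Rightarrow> nat"
  assumes fin: "finite T" "finite B" and cT: "card T \<le> t * m" and b: "1 \<le> b" "b \<le> t"
    and SB: "\<forall>z\<in>T. S z \<subseteq> B"
    and many: "\<forall>y\<in>B. t + 1 + d y \<le> card {z \<in> T. y \<in> S z} + b"
    and d_less: "\<forall>y\<in>B. d y + 1 \<le> b"
    and small: "\<forall>z\<in>T. \<forall>y\<in>S z. card (S z) \<le> d y + 1"
  shows "card B \<le> b * m"
proof -
  define w where "w y = 1 / real (d y + 1)" for y
  have "(\<Sum>y\<in>S z. w y) \<le> 1" if "z \<in> T" for z
    unfolding w_def using small that finite_subset[OF bspec[OF SB that] fin(2)]
    by (intro sum_inverse_le_one) auto
  then have "(\<Sum>z\<in>T. \<Sum>y\<in>S z. w y) \<le> (\<Sum>z\<in>T. 1)" by (intro sum_mono)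
  also have "\<dots> \<le> real t * real m" using cT by (simp flip: of_nat_mult)
  also have "(\<Sum>z\<in>T. \<Sum>y\<in>S z. w y) = (\<Sum>y\<in>B. real (card {z \<in> T. y \<in> S z}) * w y)"
  proof -
    have "(\<Sum>z\<in>T. \<Sum>y\<in>S z. w y) = (\<Sum>z\<in>T. \<Sum>y\<in>{y \<in> B. y \<in> S z}. w y)"
      using SB by (intro sum.cong refl arg_cong[where f = "sum w"]) auto
    also have "\<dots> = (\<Sum>y\<in>B. \<Sum>z\<in>{z \<in> T. y \<in> S z}. w y)"
      by (rule sum.swap_restrict[OF fin])
    finally show ?thesis by simp
  qed
  finally have upper: "(\<Sum>y\<in>B. real (card {z \<in> T. y \<in> S z}) * w y) \<le> real t * real m" .
  have "real t \<le> real b * (real (card {z \<in> T. y \<in> S z}) * w y)" if y: "y \<in> B" for y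
  proof -
    define c where "c = real (card {z \<in> T. y \<in> S z})"
    have h1: "real t + 1 + real (d y) \<le> c + real b" using many y unfolding c_def by auto
    have h2: "real (d y) + 1 \<le> real b" using d_less y by auto
    have "0 \<le> (real t - real b) * (real b - 1 - real (d y))" using h2 b by auto
    then have "real t * (real (d y) + 1) \<le> (real t + 1 + real (d y) - real b) * real b"
      by (simp add: algebra_simps)
    also have "\<dots> \<le> c * real b" using h1 b by (intro mult_right_mono) auto
    finally show ?thesis unfolding w_def c_def by (simp add: field_simps)
  qed
  then have "real (card B) * real t \<le> real b * (\<Sum>y\<in>B. real (card {z \<in> T. y \<in> S z}) * w y)"
    using sum_mono[of B "\<lambda>_. real t"] by (simp add: sum_distrib_left)
  also have "\<dots> \<le> real b * (real t * real m)" using upper b by (intro mult_left_mono) auto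
  finally have "real (card B) * real t \<le> real (b * m) * real t" by (simp add: mult_ac)
  then have "real (card B) \<le> real (b * m)" using b by simp
  then show ?thesis by (simp only: of_nat_le_iff)
qed

text \<open>Every class in \<open>A\<close> meets \<open>N\<close>, so it contributes at least one vertex to \<open>N\<close>, and a class in
  \<open>T\<close> contributes either two vertices or its unique vertex in \<open>N\<close> to the set on the right.\<close>
lemma card_classes_hit:
  assumes finV: "finite V" and finA: "finite A" and TA: "T \<subseteq> A"
    and NA: "N \<subseteq> {v \<in> V. f v \<in> A}" and cov: "\<forall>i\<in>A. N \<inter> color_class V f i \<noteq> {}"
  shows "card A + card T \<le> card N + card {z \<in> V. f z \<in> T \<and> N \<inter> color_class V f (f z) = {z}}"
proof -
  define Z where "Z i = {z \<in> color_class V f i. N \<inter> color_class V f i = {z}}" for i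
  have finN: "finite N" using NA finV finite_subset by fastforce
  have "N = (\<Union>i\<in>A. N \<inter> color_class V f i)" using NA unfolding color_class_def by auto
  moreover have "card (\<Union>i\<in>A. N \<inter> color_class V f i) = (\<Sum>i\<in>A. card (N \<inter> color_class V f i))"
    using finA finN by (intro card_UN_disjoint) (auto simp: color_class_def)
  ultimately have cN: "card N = (\<Sum>i\<in>A. card (N \<inter> color_class V f i))" by simp
  have "{z \<in> V. f z \<in> T \<and> N \<inter> color_class V f (f z) = {z}} = (\<Union>i\<in>T. Z i)"
    unfolding Z_def color_class_def by auto
  moreover have "card (\<Union>i\<in>T. Z i) = (\<Sum>i\<in>T. card (Z i))"
    using finA TA finV by (intro card_UN_disjoint) (auto simp: Z_def color_class_def intro: finite_subset)
  ultimately have cZ: "card {z \<in> V. f z \<in> T \<and> N \<inter> color_class V f (f z) = {z}} = (\<Sum>i\<in>T. card (Z i))"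
    by simp
  have one: "1 \<le> card (N \<inter> color_class V f i)" if "i \<in> A" for i
    using cov that finN by (simp add: Suc_le_eq card_gt_0_iff)
  have two: "2 \<le> card (N \<inter> color_class V f i) + card (Z i)" if "i \<in> A" for i
  proof (cases "card (N \<inter> color_class V f i) = 1")
    case True
    then obtain z where "N \<inter> color_class V f i = {z}" by (meson card_1_singletonE)
    then have "Z i = {z}" unfolding Z_def by auto
    then show ?thesis using True by simp
  qed (use one[OF that] in simp)
  have finT: "finite T" using TA finA finite_subset by blast
  have "card A + card T = (\<Sum>i\<in>A - T. 1) + (\<Sum>i\<in>T. 2)"
    using TA finT finA by (simp add: card_Diff_subset card_mono)
  also have "\<dots> \<le> (\<Sum>i\<in>A - T. card (N \<inter> color_class V f i))
      + (\<Sum>i\<in>T. card (N \<inter> color_class V f i) + card (Z i))"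
    using one two TA by (intro add_mono sum_mono) auto
  also have "\<dots> = card N + (\<Sum>i\<in>T. card (Z i))"
    using TA finA cN by (simp add: sum.distrib sum.subset_diff[of T A])
  finally show ?thesis using cZ by simp
qed

section \<open>Nearly equitable colourings\<close>

lemma nearly_equitable_card_colored_in:
  assumes "finite V" "nearly_equitable V E s m f lo hi" "X \<subseteq> {..<s}"
  shows "card {v \<in> V. f v \<in> X} + of_bool (lo \<in> X) = card X * m + of_bool (hi \<in> X)"
proof -
  have fin: "finite X" using assms(3) finite_subset by blast
  have delta: "(\<Sum>i\<in>X. of_bool (i = a)) = (of_bool (a \<in> X) :: nat)" for a
    using fin by (simp add: of_bool_def)
  have "card {v \<in> V. f v \<in> X} + of_bool (lo \<in> X) =
      (\<Sum>i\<in>X. card (color_class V f i) + of_bool (i = lo))"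
    unfolding sum.distrib delta card_colored_in[OF assms(1) fin] ..
  also have "\<dots> = (\<Sum>i\<in>X. m + of_bool (i = hi))"
    using assms(2,3) unfolding nearly_equitable_def by (intro sum.cong) auto
  also have "\<dots> = card X * m + of_bool (hi \<in> X)"
    unfolding sum.distrib delta by simp
  finally show ?thesis .
qed

lemma equitable_if_nearly_equitable_reach:
  assumes G: "simple_graph V E" and ne: "nearly_equitable V E s m f lo hi"
    and reach: "(rel_within (class_arc V E f) {..<s})\<^sup>*\<^sup>* hi lo"
  shows "\<exists>g. equitable_coloring V E s m g"
proof -
  obtain ps where ps: "distinct (hi # ps)" "last (hi # ps) = lo"
    "successively (rel_within (class_arc V E f) {..<s}) (hi # ps)"
    using rtranclp_imp_distinct_path[OF reach] by blast
  have "successively (class_arc V E f) (hi # ps)"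
    using ps(3) by (rule successively_mono) (auto simp: rel_within_def)
  moreover have "proper_coloring E f" using ne unfolding nearly_equitable_def by blast
  ultimately obtain g where g: "proper_coloring E g"
    "\<forall>v. f v \<notin> set (hi # ps) \<longrightarrow> g v = f v" "\<forall>v. f v \<in> set (hi # ps) \<longrightarrow> g v \<in> set (hi # ps)"
    "\<forall>i. card (color_class V g i) + of_bool (i = hi) = card (color_class V f i) + of_bool (i = lo)"
    using shift_along_path[OF G _ _ ps(1)] unfolding ps(2) by blast
  have range: "\<forall>v\<in>V. f v < s" and hi: "hi < s"
    and card_f: "\<forall>i<s. card (color_class V f i) + of_bool (i = lo) = m + of_bool (i = hi)"
    using ne unfolding nearly_equitable_def by blast+
  have "set (hi # ps) \<subseteq> {..<s}" using successively_rel_within_set[OF ps(3)] hi by auto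
  then have "g v < s" if "v \<in> V" for v
    using g(2,3) range that by (cases "f v \<in> set (hi # ps)") auto
  moreover have "card (color_class V g i) = m" if "i < s" for i
    using g(4)[rule_format, of i] card_f that by simp
  ultimately show ?thesis using g(1) unfolding equitable_coloring_def by blast
qed

lemma color_class_glue:
  assumes "\<forall>v\<in>V - U. f v \<in> C" "\<forall>v\<in>U. g v \<notin> C" "U \<subseteq> V"
  shows "color_class V (\<lambda>v. if v \<in> U then g v else f v) i =
    (if i \<in> C then color_class (V - U) f i else {v \<in> U. g v = i})"
proof (rule set_eqI)
  fix v
  show "v \<in> color_class V (\<lambda>v. if v \<in> U then g v else f v) i \<longleftrightarrow>
      v \<in> (if i \<in> C then color_class (V - U) f i else {v \<in> U. g v = i})"
    using assms unfolding color_class_def by (cases "v \<in> U"; cases "i \<in> C") auto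
qed

lemma proper_coloring_glue:
  assumes G: "simple_graph V E"
    and f: "\<forall>u v. E u v \<longrightarrow> u \<notin> U \<longrightarrow> v \<notin> U \<longrightarrow> f u \<noteq> f v"
    and g: "\<forall>u\<in>U. \<forall>v\<in>U. E u v \<longrightarrow> g u \<noteq> g v"
    and "\<forall>v\<in>V - U. f v \<in> C" "\<forall>v\<in>U. g v \<notin> C"
  shows "proper_coloring E (\<lambda>v. if v \<in> U then g v else f v)"
  unfolding proper_coloring_def
proof (intro allI impI)
  fix u v assume e: "E u v"
  then have "u \<in> V" "v \<in> V" using simple_graph_adj_in[OF G] by auto
  show "(if u \<in> U then g u else f u) \<noteq> (if v \<in> U then g v else f v)"
  proof (cases "u \<in> U \<longleftrightarrow> v \<in> U")
    case True
    then show ?thesis using f g e \<open>u \<in> V\<close> \<open>v \<in> V\<close> by (cases "u \<in> U") auto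
  next
    case False
    then have "(if u \<in> U then g u else f u) \<in> C \<longleftrightarrow> (if v \<in> U then g v else f v) \<notin> C"
      using assms(4,5) \<open>u \<in> V\<close> \<open>v \<in> V\<close> by auto
    then show ?thesis by metis
  qed
qed

text \<open>\<open>equitable_smaller\<close> is the induction hypothesis on the number of vertices in the proof of
  \<open>hajnal_szemeredi\<close>.\<close>

locale equitable_induction_step =
  fixes V :: "'a set" and E :: "'a \<Rightarrow> 'a \<Rightarrow> bool" and s m :: nat
  assumes graph: "simple_graph V E"
    and degree_less: "\<forall>v\<in>V. degree V E v < s"
    and equitable_smaller: "\<And>V' E' s' m'. V' \<subset> V \<Longrightarrow> simple_graph V' E' \<Longrightarrow>
      \<forall>v\<in>V'. degree V' E' v < s' \<Longrightarrow> card V' = s' * m' \<Longrightarrow> \<exists>g. equitable_coloring V' E' s' m' g"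
begin

lemma finite_V: "finite V"
  using simple_graph_finite[OF graph] .

definition accessible :: "('a \<Rightarrow> nat) \<Rightarrow> nat \<Rightarrow> nat set" where
  "accessible f lo = {i. i < s \<and> (rel_within (class_arc V E f) {..<s})\<^sup>*\<^sup>* i lo}"

definition terminal :: "('a \<Rightarrow> nat) \<Rightarrow> nat \<Rightarrow> nat \<Rightarrow> bool" where
  "terminal f lo W \<longleftrightarrow>
     W \<in> accessible f lo \<and> cut_off (class_arc V E f) (accessible f lo) lo W = {}"

definition solo :: "('a \<Rightarrow> nat) \<Rightarrow> nat \<Rightarrow> nat \<Rightarrow> 'a \<Rightarrow> 'a \<Rightarrow> bool" where
  "solo f lo W z y \<longleftrightarrow> y \<in> V \<and> f y \<notin> accessible f lo \<and> {u \<in> color_class V f W. E y u} = {z}"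

lemma accessible_subset: "accessible f lo \<subseteq> {..<s}"
  unfolding accessible_def by auto

lemma finite_accessible: "finite (accessible f lo)"
  using accessible_subset finite_subset by blast

lemma lo_accessible: "lo < s \<Longrightarrow> lo \<in> accessible f lo"
  unfolding accessible_def by auto

lemma rtranclp_within_accessible:
  assumes "i \<in> accessible f lo"
  shows "(rel_within (class_arc V E f) (accessible f lo))\<^sup>*\<^sup>* i lo"
proof -
  have "(rel_within (class_arc V E f) {..<s})\<^sup>*\<^sup>* i lo"
    using assms unfolding accessible_def by auto
  then show ?thesis
  proof (induction rule: converse_rtranclp_induct)
    case (step i i')
    have "i' \<in> accessible f lo" using step(1,2) unfolding accessible_def rel_within_def by auto
    moreover have "i \<in> accessible f lo"
      using step(1) converse_rtranclp_into_rtranclp[OF step(1,2)]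
      unfolding accessible_def rel_within_def by auto
    ultimately have "rel_within (class_arc V E f) (accessible f lo) i i'"
      using step(1) unfolding rel_within_def by auto
    then show ?case using step(3) by (rule converse_rtranclp_into_rtranclp)
  qed simp
qed

lemma terminal_reach:
  assumes "terminal f lo W" "U \<in> accessible f lo" "U \<noteq> W"
  shows "(rel_within (class_arc V E f) (accessible f lo - {W}))\<^sup>*\<^sup>* U lo"
  using assms unfolding terminal_def cut_off_def by blast

lemma not_movable_into_accessible:
  assumes "\<forall>v\<in>V. f v < s" "y \<in> V" "f y \<notin> accessible f lo" "X \<in> accessible f lo"
  shows "\<not> movable V E f y X"
proof
  assume "movable V E f y X"
  moreover have X: "X < s" "(rel_within (class_arc V E f) {..<s})\<^sup>*\<^sup>* X lo"
    using assms(4) unfolding accessible_def by auto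
  moreover have "f y \<noteq> X" "y \<in> color_class V f (f y)" "f y < s"
    using assms unfolding color_class_def by auto
  ultimately have "rel_within (class_arc V E f) {..<s} (f y) X"
    unfolding class_arc_def rel_within_def by auto
  then have "(rel_within (class_arc V E f) {..<s})\<^sup>*\<^sup>* (f y) lo"
    using X(2) by (rule converse_rtranclp_into_rtranclp)
  then show False using assms(3) \<open>f y < s\<close> unfolding accessible_def by simp
qed

lemma card_outside_accessible:
  assumes "nearly_equitable V E s m f lo hi" "hi \<notin> accessible f lo"
  shows "card {v \<in> V. f v \<notin> accessible f lo} = card ({..<s} - accessible f lo) * m + 1"
proof -
  have "{v \<in> V. f v \<notin> accessible f lo} = {v \<in> V. f v \<in> {..<s} - accessible f lo}"
    using assms(1) unfolding nearly_equitable_def by auto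
  then show ?thesis
    using nearly_equitable_card_colored_in[OF finite_V assms(1), of "{..<s} - accessible f lo"]
      lo_accessible assms unfolding nearly_equitable_def by auto
qed

lemma degree_outside_accessible_less:
  assumes "\<forall>v\<in>V. f v < s" "y \<in> V" "f y \<notin> accessible f lo"
  shows "card {u \<in> V. E y u \<and> f u \<notin> accessible f lo} < card ({..<s} - accessible f lo)"
proof -
  have "card {i \<in> accessible f lo. \<not> movable V E f y i}
      \<le> card {u \<in> V. E y u \<and> f u \<in> accessible f lo}"
    by (intro card_not_movable_le finite_V finite_accessible)
  moreover have "{i \<in> accessible f lo. \<not> movable V E f y i} = accessible f lo"
    using not_movable_into_accessible[OF assms] by blast
  ultimately have "card (accessible f lo) \<le> card {u \<in> V. E y u \<and> f u \<in> accessible f lo}"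
    by simp
  moreover have "card {u \<in> V. E y u \<and> f u \<in> accessible f lo}
      + card {u \<in> V. E y u \<and> f u \<notin> accessible f lo} < s"
    using degree_split[OF finite_V, of E y "\<lambda>u. f u \<in> accessible f lo"] degree_less assms(2)
    by fastforce
  moreover have "card ({..<s} - accessible f lo) = s - card (accessible f lo)"
    using card_Diff_subset[OF finite_accessible accessible_subset] by simp
  ultimately show ?thesis by linarith
qed

lemma card_neighbours_outside_le:
  assumes "\<forall>v\<in>V. f v < s" "A \<subseteq> {..<s}" "W \<in> A" "z \<in> V"
  shows "card {u \<in> V. E z u \<and> f u \<notin> A} \<le> card {i \<in> A - {W}. movable V E f z i} + card ({..<s} - A)"
proof -
  have finA: "finite A" using assms(2) finite_subset by blast
  have "card {i \<in> A - {W}. \<not> movable V E f z i} \<le> card {u \<in> V. E z u \<and> f u \<in> A - {W}}"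
    using finA by (intro card_not_movable_le finite_V) simp
  also have "\<dots> \<le> card {u \<in> V. E z u \<and> f u \<in> A}"
    using finite_V by (intro card_mono) auto
  finally have "card {i \<in> A - {W}. \<not> movable V E f z i} \<le> card {u \<in> V. E z u \<and> f u \<in> A}" .
  moreover have "card {i \<in> A - {W}. movable V E f z i} + card {i \<in> A - {W}. \<not> movable V E f z i}
      = card A - 1"
    using card_filter_split[of "A - {W}" "movable V E f z"] finA assms(3) by simp
  moreover have "card {u \<in> V. E z u \<and> f u \<in> A} + card {u \<in> V. E z u \<and> f u \<notin> A} < s"
    using degree_split[OF finite_V, of E z "\<lambda>u. f u \<in> A"] degree_less assms(4) by fastforce
  moreover have "card ({..<s} - A) = s - card A" "card A \<le> s" "1 \<le> card A"
    using card_Diff_subset[OF finA assms(2)] card_mono[OF _ assms(2)] assms(3) finA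
    by (auto simp: Suc_le_eq card_gt_0_iff)
  ultimately show ?thesis by linarith
qed

lemma card_neighbours_outside_le_stuck:
  assumes "\<forall>v\<in>V. f v < s" "W \<in> accessible f lo" "z \<in> V"
    and "\<forall>X\<in>accessible f lo - {W}. \<not> movable V E f z X"
  shows "card {u \<in> V. E z u \<and> f u \<notin> accessible f lo} \<le> card ({..<s} - accessible f lo)"
proof -
  have empty: "{i \<in> accessible f lo - {W}. movable V E f z i} = {}" using assms(4) by blast
  show ?thesis using card_neighbours_outside_le[OF assms(1) accessible_subset assms(2,3)]
    unfolding empty by simp
qed

lemma equitable_recoloring:
  assumes "U \<subset> V" "finite C" "card U = card C * m" "\<forall>v\<in>U. card {u \<in> U. E v u} < card C"
  shows "\<exists>h. (\<forall>v\<in>U. h v \<in> C) \<and> (\<forall>u\<in>U. \<forall>v\<in>U. E u v \<longrightarrow> h u \<noteq> h v)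
    \<and> (\<forall>c\<in>C. card {v \<in> U. h v = c} = m)"
proof -
  define E' where "E' u v \<longleftrightarrow> E u v \<and> u \<in> U \<and> v \<in> U" for u v
  have "simple_graph U E'"
    using assms(1) finite_V graph rev_finite_subset[of V U]
    unfolding simple_graph_def E'_def by auto
  moreover have "{u \<in> U. E' v u} = {u \<in> U. E v u}" if "v \<in> U" for v
    using that unfolding E'_def by auto
  then have "\<forall>v\<in>U. degree U E' v < card C"
    using assms(4) unfolding degree_def by simp
  ultimately obtain g where g: "equitable_coloring U E' (card C) m g"
    using equitable_smaller[OF assms(1)] assms(3) by blast
  obtain \<phi> where \<phi>: "bij_betw \<phi> {..<card C} C"
    using assms(2) ex_bij_betw_nat_finite lessThan_atLeast0 by metis
  have g_range: "g v \<in> {..<card C}" if "v \<in> U" for v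
    using g that unfolding equitable_coloring_def by auto
  have inj: "\<phi> i = \<phi> j \<longleftrightarrow> i = j" if "i \<in> {..<card C}" "j \<in> {..<card C}" for i j
    using \<phi> that unfolding bij_betw_def inj_on_def by blast
  show ?thesis
  proof (intro exI[of _ "\<phi> \<circ> g"] conjI ballI impI)
    show "(\<phi> \<circ> g) v \<in> C" if "v \<in> U" for v using \<phi> g_range[OF that] bij_betwE by fastforce
    show "(\<phi> \<circ> g) u \<noteq> (\<phi> \<circ> g) v" if "u \<in> U" "v \<in> U" "E u v" for u v
    proof -
      have "proper_coloring E' g" using g unfolding equitable_coloring_def by blast
      then have "g u \<noteq> g v" using that unfolding proper_coloring_def E'_def by blast
      then show ?thesis using inj[OF g_range[OF that(1)] g_range[OF that(2)]] by simp
    qed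
  next
    fix c assume "c \<in> C"
    then have "c \<in> \<phi> ` {..<card C}" using \<phi> by (simp add: bij_betw_def)
    then obtain i where i: "i \<in> {..<card C}" "\<phi> i = c" by blast
    have "(\<phi> \<circ> g) v = c \<longleftrightarrow> g v = i" if "v \<in> U" for v
      using inj[OF g_range[OF that] i(1)] i(2) by simp
    then have "{v \<in> U. (\<phi> \<circ> g) v = c} = color_class U g i"
      unfolding color_class_def by auto
    then show "card {v \<in> U. (\<phi> \<circ> g) v = c} = m" using g i unfolding equitable_coloring_def by auto
  qed
qed

lemma recoloring_outside_accessible:
  assumes ne: "nearly_equitable V E s m f lo hi" and "hi \<notin> accessible f lo"
    and "y \<in> V" "f y \<notin> accessible f lo"
  defines "U \<equiv> {v \<in> V. f v \<notin> accessible f lo} - {y}"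
  shows "\<exists>h. (\<forall>v\<in>U. h v \<in> {..<s} - accessible f lo) \<and> (\<forall>u\<in>U. \<forall>v\<in>U. E u v \<longrightarrow> h u \<noteq> h v)
    \<and> (\<forall>c\<in>{..<s} - accessible f lo. card {v \<in> U. h v = c} = m)"
proof (rule equitable_recoloring)
  show "U \<subset> V" using assms unfolding U_def by auto
  show "card U = card ({..<s} - accessible f lo) * m"
    using card_outside_accessible[OF assms(1,2)] assms(3,4) finite_V unfolding U_def by simp
  show "\<forall>v\<in>U. card {u \<in> U. E v u} < card ({..<s} - accessible f lo)"
  proof
    fix v assume "v \<in> U"
    then have "card {u \<in> U. E v u} \<le> card {u \<in> V. E v u \<and> f u \<notin> accessible f lo}"
      using finite_V unfolding U_def by (intro card_mono) auto
    also have "\<dots> < card ({..<s} - accessible f lo)"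
      using \<open>v \<in> U\<close> ne unfolding U_def nearly_equitable_def
      by (intro degree_outside_accessible_less) auto
    finally show "card {u \<in> U. E v u} < card ({..<s} - accessible f lo)" .
  qed
qed simp

lemma solo_adj:
  assumes "solo f lo W z y"
  shows "E y z" "z \<in> V" "f z = W"
  using assms unfolding solo_def color_class_def by auto

text \<open>Once every accessible class has exactly \<open>m\<close> vertices, the remaining vertices are recoloured
  equitably with the inaccessible colours by the induction hypothesis.\<close>
lemma equitable_if_accessible_classes_full:
  assumes ne: "nearly_equitable V E s m f lo hi" and hi: "hi \<notin> accessible f lo"
    and y: "y \<in> V" "f y \<notin> accessible f lo"
    and g: "proper_coloring E g" "\<forall>v\<in>V. g v < s"
      "\<forall>v\<in>V. g v \<in> accessible f lo \<longleftrightarrow> f v \<in> accessible f lo \<or> v = y"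
      "\<forall>i\<in>accessible f lo. card (color_class V g i) = m"
  shows "\<exists>g'. equitable_coloring V E s m g'"
proof -
  define A where "A = accessible f lo"
  define U where "U = {v \<in> V. f v \<notin> A} - {y}"
  obtain h where h: "\<forall>v\<in>U. h v \<in> {..<s} - A" "\<forall>u\<in>U. \<forall>v\<in>U. E u v \<longrightarrow> h u \<noteq> h v"
    "\<forall>c\<in>{..<s} - A. card {v \<in> U. h v = c} = m"
    using recoloring_outside_accessible[OF ne hi y] unfolding A_def U_def by blast
  have g_A: "\<forall>v\<in>V - U. g v \<in> A" and h_A: "\<forall>v\<in>U. h v \<notin> A"
    using g(3) h(1) unfolding A_def U_def by auto
  have "U \<subseteq> V" unfolding U_def by auto
  define g' where "g' v = (if v \<in> U then h v else g v)" for v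
  have "proper_coloring E g'"
    unfolding g'_def using g(1) h(2) g_A h_A
    by (intro proper_coloring_glue[OF graph]) (auto simp: proper_coloring_def)
  moreover have "g' v < s" if "v \<in> V" for v
    using that g(2) h(1) unfolding g'_def by auto
  moreover have "card (color_class V g' i) = m" if "i < s" for i
  proof (cases "i \<in> A")
    case True
    have "color_class (V - U) g i = color_class V g i"
      using True g(3) unfolding color_class_def A_def U_def by auto
    then show ?thesis
      using color_class_glue[OF g_A h_A \<open>U \<subseteq> V\<close>, of i] True g(4)
      unfolding g'_def A_def by simp
  next
    case False
    then show ?thesis
      using color_class_glue[OF g_A h_A \<open>U \<subseteq> V\<close>, of i] h(3) that unfolding g'_def by simp
  qed
  ultimately show ?thesis unfolding equitable_coloring_def by blast
qed

lemma solo_move: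
  assumes proper: "proper_coloring E f" and y: "solo f lo W z y" and W: "W \<in> accessible f lo"
    and X: "X \<noteq> W" "movable V E f z X"
  shows "proper_coloring E (f(z := X, y := W))"
    and "card (color_class V (f(z := X, y := W)) i) + of_bool (i = f y) =
      card (color_class V f i) + of_bool (i = X)"
proof -
  have z: "z \<in> V" "f z = W" using solo_adj[OF y] by blast+
  have yV: "y \<in> V" "f y \<noteq> W" and N_y: "{u \<in> color_class V f W. E y u} = {z}"
    using y W unfolding solo_def by auto
  have "movable V E (f(z := X)) y W"
    using N_y X(1) unfolding movable_def color_class_def by auto
  then show "proper_coloring E (f(z := X, y := W))"
    by (intro proper_coloring_upd[OF graph] proper_coloring_upd[OF graph proper X(2)])
  have "y \<noteq> z" using yV z by auto
  then show "card (color_class V (f(z := X, y := W)) i) + of_bool (i = f y) =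
      card (color_class V f i) + of_bool (i = X)"
    using card_color_class_upd[where f = "f(z := X)", OF finite_V yV(1), of "f y" W i]
      card_color_class_upd[where f = f, OF finite_V z X(1)[symmetric], of i] yV(2) by simp
qed

lemma shift_avoiding_terminal:
  assumes W: "terminal f lo W" and X: "X \<in> accessible f lo" "X \<noteq> W" and g: "proper_coloring E g"
    and same: "\<forall>i\<in>accessible f lo - {W, X}. color_class V g i = color_class V f i"
    and grows: "color_class V f X \<subseteq> color_class V g X"
  shows "\<exists>g'. proper_coloring E g'
    \<and> (\<forall>v. g v \<notin> accessible f lo - {W} \<longrightarrow> g' v = g v)
    \<and> (\<forall>v. g v \<in> accessible f lo - {W} \<longrightarrow> g' v \<in> accessible f lo - {W})
    \<and> (\<forall>i. card (color_class V g' i) + of_bool (i = X) = card (color_class V g i) + of_bool (i = lo))"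
proof -
  obtain ps where ps: "distinct (X # ps)" "last (X # ps) = lo"
    "successively (rel_within (class_arc V E f) (accessible f lo - {W})) (X # ps)"
    using rtranclp_imp_distinct_path[OF terminal_reach[OF W X]] by blast
  have path: "set (X # ps) \<subseteq> accessible f lo - {W}"
    using successively_rel_within_set[OF ps(3)] X by auto
  have "successively (class_arc V E f) (X # ps)"
    using ps(3) by (rule successively_mono) (auto simp: rel_within_def)
  moreover have "\<forall>i\<in>set ps. color_class V g i = color_class V f i"
  proof
    fix i assume "i \<in> set ps"
    then have "i \<in> accessible f lo - {W, X}" using path ps(1) by auto
    then show "color_class V g i = color_class V f i" using same by blast
  qed
  ultimately have "successively (class_arc V E g) (X # ps)"
    by (rule successively_class_arc_transfer[OF _ grows])
  then obtain g' where g': "proper_coloring E g'"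
    "\<forall>v. g v \<notin> set (X # ps) \<longrightarrow> g' v = g v" "\<forall>v. g v \<in> set (X # ps) \<longrightarrow> g' v \<in> set (X # ps)"
    "\<forall>i. card (color_class V g' i) + of_bool (i = X) = card (color_class V g i) + of_bool (i = lo)"
    using shift_along_path[OF graph g _ ps(1)] unfolding ps(2) by blast
  moreover have "\<forall>v. g v \<notin> accessible f lo - {W} \<longrightarrow> g' v = g v" using g'(2) path by auto
  moreover have "\<forall>v. g v \<in> accessible f lo - {W} \<longrightarrow> g' v \<in> accessible f lo - {W}"
    using g'(2,3) path by (metis subsetD)
  ultimately show ?thesis by blast
qed

text \<open>If the solo neighbour \<open>z\<close> of \<open>y\<close> can move to another accessible class \<open>X\<close>, move \<open>z\<close> to
  \<open>X\<close> and \<open>y\<close> into \<open>W\<close>, and shift the surplus of \<open>X\<close> to \<open>lo\<close> along a path avoiding \<open>W\<close>.\<close>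
lemma solo_move_and_shift:
  assumes ne: "nearly_equitable V E s m f lo hi" and hi: "hi \<notin> accessible f lo"
    and W: "terminal f lo W" and y: "solo f lo W z y"
    and X: "X \<in> accessible f lo" "X \<noteq> W" "movable V E f z X"
  shows "\<exists>g. proper_coloring E g \<and> (\<forall>v\<in>V. g v < s)
    \<and> (\<forall>v\<in>V. g v \<in> accessible f lo \<longleftrightarrow> f v \<in> accessible f lo \<or> v = y)
    \<and> (\<forall>i\<in>accessible f lo. card (color_class V g i) = m)"
proof -
  define A where "A = accessible f lo"
  define f1 where "f1 = f(z := X, y := W)"
  have range: "\<forall>v\<in>V. f v < s" and proper: "proper_coloring E f"
    and card_f: "\<forall>i<s. card (color_class V f i) + of_bool (i = lo) = m + of_bool (i = hi)"
    using ne unfolding nearly_equitable_def by blast+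
  have WA: "W \<in> A" using W unfolding terminal_def A_def by blast
  note f1 = solo_move[OF proper y WA[unfolded A_def] X(2,3), folded f1_def]
  have z: "f z = W" and yV: "f y \<notin> A" using solo_adj[OF y] y unfolding solo_def A_def by blast+
  have "\<forall>i\<in>A - {W, X}. color_class V f1 i = color_class V f i"
    using yV z unfolding f1_def color_class_def by auto
  moreover have "color_class V f X \<subseteq> color_class V f1 X"
    using yV X(1) unfolding f1_def color_class_def A_def by auto
  ultimately obtain f2 where f2: "proper_coloring E f2"
    "\<forall>v. f1 v \<notin> A - {W} \<longrightarrow> f2 v = f1 v" "\<forall>v. f1 v \<in> A - {W} \<longrightarrow> f2 v \<in> A - {W}"
    "\<forall>i. card (color_class V f2 i) + of_bool (i = X) = card (color_class V f1 i) + of_bool (i = lo)"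
    using shift_avoiding_terminal[OF W X(1,2) f1(1)] unfolding A_def by blast
  have f1_A: "f1 v \<in> A \<longleftrightarrow> f v \<in> A \<or> v = y" for v
    using WA X(1) z unfolding f1_def A_def by auto
  have f2_A: "f2 v \<in> A \<longleftrightarrow> f1 v \<in> A" for v
    using f2(2,3) WA by (cases "f1 v \<in> A - {W}") auto
  have "f2 v < s" if "v \<in> V" for v
  proof (cases "f1 v \<in> A")
    case True
    then show ?thesis using f2_A accessible_subset unfolding A_def by blast
  next
    case False
    then have "f2 v = f1 v" using f2(2) by auto
    moreover have "f1 v = f v" using False WA X(1) unfolding f1_def A_def by auto
    ultimately show ?thesis using range that by simp
  qed
  moreover have "card (color_class V f2 i) = m" if "i \<in> A" for i
  proof -
    have "i < s" "i \<noteq> hi" "i \<noteq> f y" using that accessible_subset hi yV unfolding A_def by auto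
    then show ?thesis using f2(4)[rule_format, of i] f1(2)[of i] card_f by simp
  qed
  ultimately show ?thesis using f2(1) f2_A f1_A unfolding A_def by blast
qed

text \<open>If \<open>z\<close> cannot move, it has at most as many neighbours outside the accessible classes as there
  are inaccessible classes, \<open>y\<close> among them. So after the vertices outside the accessible classes
  other than \<open>y\<close> are recoloured equitably, some inaccessible colour is free for \<open>z\<close>.\<close>
lemma recoloring_outside_accessible_with_solo:
  assumes ne: "nearly_equitable V E s m f lo hi" and hi: "hi \<notin> accessible f lo"
    and W: "W \<in> accessible f lo" and y: "solo f lo W z y"
    and stuck: "\<forall>X\<in>accessible f lo - {W}. \<not> movable V E f z X"
  defines "U \<equiv> insert z ({v \<in> V. f v \<notin> accessible f lo} - {y})"
  shows "\<exists>h c. c \<in> {..<s} - accessible f lo \<and> (\<forall>v\<in>U. h v \<in> {..<s} - accessible f lo)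
    \<and> (\<forall>u\<in>U. \<forall>v\<in>U. E u v \<longrightarrow> h u \<noteq> h v)
    \<and> (\<forall>i\<in>{..<s} - accessible f lo. card {v \<in> U. h v = i} = m + of_bool (i = c))"
proof -
  define A where "A = accessible f lo"
  define U' where "U' = {v \<in> V. f v \<notin> A} - {y}"
  have z: "E y z" "E z y" "z \<in> V" "f z = W"
    using solo_adj[OF y] simple_graph_sym[OF graph] by blast+
  have yV: "y \<in> V" "f y \<notin> A" using y unfolding solo_def A_def by blast+
  have "z \<notin> U'" "U' \<subseteq> V" using z W unfolding U'_def A_def by auto
  obtain h where h: "\<forall>v\<in>U'. h v \<in> {..<s} - A" "\<forall>u\<in>U'. \<forall>v\<in>U'. E u v \<longrightarrow> h u \<noteq> h v"
    "\<forall>c\<in>{..<s} - A. card {v \<in> U'. h v = c} = m"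
    using recoloring_outside_accessible[OF ne hi yV[unfolded A_def]] unfolding A_def U'_def by blast
  have range: "\<forall>v\<in>V. f v < s" using ne unfolding nearly_equitable_def by blast
  define N where "N = {u \<in> V. E z u \<and> f u \<notin> A}"
  have finN: "finite N" using finite_V unfolding N_def by simp
  have "card {u \<in> U'. E z u} \<le> card (N - {y})"
    using finN unfolding U'_def N_def by (intro card_mono) auto
  also have "\<dots> < card N" using finN yV z unfolding N_def by (intro card_Diff1_less) auto
  also have "\<dots> \<le> card ({..<s} - A)"
    using card_neighbours_outside_le_stuck[OF range W z(3) stuck] unfolding N_def A_def .
  finally have "card {u \<in> U'. E z u} < card ({..<s} - A)" .
  moreover have "finite {u \<in> U'. E z u}"
    by (rule finite_subset[OF _ finite_V]) (use \<open>U' \<subseteq> V\<close> in auto)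
  ultimately obtain c where c: "c \<in> {..<s} - A" "\<forall>u\<in>U'. E z u \<longrightarrow> h u \<noteq> c"
    using ex_unused_color[of "{..<s} - A" "{u \<in> U'. E z u}" h] by auto
  have "(h(z := c)) u \<noteq> (h(z := c)) v" if "E u v" "u \<in> insert z U'" "v \<in> insert z U'" for u v
  proof -
    have "u \<noteq> v" using that(1) simple_graph_irrefl[OF graph] by blast
    moreover have "h u \<noteq> c" if "v = z" "u \<in> U'"
      using c(2) that simple_graph_sym[OF graph \<open>E u v\<close>] by blast
    moreover have "h v \<noteq> c" if "u = z" "v \<in> U'" using c(2) that \<open>E u v\<close> by blast
    ultimately show ?thesis using h(2) that by (cases "u = z"; cases "v = z") auto
  qed
  moreover have "card {v \<in> insert z U'. (h(z := c)) v = i} = m + of_bool (i = c)" if "i \<in> {..<s} - A" for i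
  proof -
    have "{v \<in> insert z U'. (h(z := c)) v = i} = {v \<in> U'. h v = i} \<union> (if i = c then {z} else {})"
      using \<open>z \<notin> U'\<close> by auto
    moreover have "finite {v \<in> U'. h v = i}"
      by (rule finite_subset[OF _ finite_V]) (use \<open>U' \<subseteq> V\<close> in auto)
    ultimately show ?thesis using h(3) that \<open>z \<notin> U'\<close> by auto
  qed
  moreover have "\<forall>v\<in>insert z U'. (h(z := c)) v \<in> {..<s} - A" using h(1) c(1) by auto
  ultimately show ?thesis using c(1) unfolding U_def U'_def A_def by blast
qed

lemma proper_coloring_upd_except:
  assumes proper: "proper_coloring E f" and N_y: "{u \<in> color_class V f W. E y u} = {z}"
    and e: "E u v" and "u \<noteq> z" "v \<noteq> z"
  shows "(f(y := W)) u \<noteq> (f(y := W)) v"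
proof -
  have W_nbr: "f w \<noteq> W" if "E y w" "w \<in> V" "w \<noteq> z" for w
    using N_y that unfolding color_class_def by auto
  have "u \<in> V" "v \<in> V" "u \<noteq> v"
    using e simple_graph_adj_in[OF graph] simple_graph_irrefl[OF graph] by blast+
  consider "u = y" | "v = y" | "u \<noteq> y" "v \<noteq> y" by blast
  then show ?thesis
  proof cases
    case 1
    then show ?thesis using W_nbr[of v] assms(3-5) \<open>v \<in> V\<close> \<open>u \<noteq> v\<close> by auto
  next
    case 2
    then show ?thesis using W_nbr[of u] simple_graph_sym[OF graph e] assms(4) \<open>u \<in> V\<close> \<open>u \<noteq> v\<close>
      by auto
  next
    case 3
    then show ?thesis using proper e unfolding proper_coloring_def by auto
  qed
qed

lemma solo_exchange_coloring:
  assumes ne: "nearly_equitable V E s m f lo hi" and hi: "hi \<notin> accessible f lo"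
    and W: "W \<in> accessible f lo" and y: "solo f lo W z y"
    and stuck: "\<forall>X\<in>accessible f lo - {W}. \<not> movable V E f z X"
  shows "\<exists>f' c. c \<in> {..<s} - accessible f lo \<and> proper_coloring E f' \<and> (\<forall>v\<in>V. f' v < s)
    \<and> (\<forall>i\<in>accessible f lo - {W}. color_class V f' i = color_class V f i)
    \<and> color_class V f' W = insert y (color_class V f W - {z})
    \<and> (\<forall>i\<in>{..<s} - accessible f lo. card (color_class V f' i) = m + of_bool (i = c))
    \<and> (\<forall>v\<in>V. f v \<notin> accessible f lo \<longrightarrow> v \<noteq> y \<longrightarrow> f' v \<notin> accessible f lo)"
proof -
  define A where "A = accessible f lo"
  define U where "U = insert z ({v \<in> V. f v \<notin> A} - {y})"
  obtain h c where c: "c \<in> {..<s} - A" and h: "\<forall>v\<in>U. h v \<in> {..<s} - A"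
    "\<forall>u\<in>U. \<forall>v\<in>U. E u v \<longrightarrow> h u \<noteq> h v" "\<forall>i\<in>{..<s} - A. card {v \<in> U. h v = i} = m + of_bool (i = c)"
    using recoloring_outside_accessible_with_solo[OF assms] unfolding U_def A_def by blast
  have proper: "proper_coloring E f" using ne unfolding nearly_equitable_def by blast
  have z: "z \<in> V" "f z = W" using solo_adj[OF y] by blast+
  have yV: "y \<in> V" "f y \<notin> A" and N_y: "{u \<in> color_class V f W. E y u} = {z}"
    using y unfolding solo_def A_def by blast+
  have "U \<subseteq> V" "y \<notin> U" using z yV W unfolding U_def A_def by auto
  define g where "g = f(y := W)"
  define f' where "f' v = (if v \<in> U then h v else g v)" for v
  have g_A: "\<forall>v\<in>V - U. g v \<in> A" and h_A: "\<forall>v\<in>U. h v \<notin> A"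
    using W h(1) unfolding g_def U_def A_def by auto
  have "g u \<noteq> g v" if "E u v" "u \<notin> U" "v \<notin> U" for u v
    using proper_coloring_upd_except[OF proper N_y that(1)] that unfolding g_def U_def by blast
  then have "proper_coloring E f'"
    unfolding f'_def using g_A h_A h(2) by (intro proper_coloring_glue[OF graph]) auto
  moreover have "\<forall>v\<in>V. f' v < s"
    using g_A h(1) accessible_subset unfolding f'_def A_def by fastforce
  moreover have "color_class V f' i = (if i = W then insert y (color_class V f W - {z}) else color_class V f i)"
    if "i \<in> A" for i
  proof -
    have "color_class (V - U) g i = (if i = W then insert y (color_class V f W - {z}) else color_class V f i)"
      using that z yV unfolding g_def U_def color_class_def by auto
    then show ?thesis using color_class_glue[OF g_A h_A \<open>U \<subseteq> V\<close>, of i] that unfolding f'_def by simp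
  qed
  moreover have "color_class V f' i = {v \<in> U. h v = i}" if "i \<notin> A" for i
    using color_class_glue[OF g_A h_A \<open>U \<subseteq> V\<close>, of i] that unfolding f'_def by simp
  moreover have "\<forall>v\<in>V. f v \<notin> A \<longrightarrow> v \<noteq> y \<longrightarrow> f' v \<notin> A"
    using h_A unfolding f'_def U_def by auto
  ultimately show ?thesis using c W h(3) unfolding A_def by (intro exI[of _ f'] exI[of _ c]) auto
qed

text \<open>Exchanging \<open>z\<close> for \<open>y\<close> in a terminal class \<open>W\<close> keeps every accessible class accessible:
  the classes other than \<open>W\<close> still reach \<open>lo\<close> avoiding \<open>W\<close>, and the first arc out of \<open>W\<close> is
  witnessed by a vertex other than \<open>z\<close>, which cannot move.\<close>
lemma accessible_subset_exchange:
  assumes W: "terminal f lo W" and z: "z \<in> color_class V f W"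
    and stuck: "\<forall>X\<in>accessible f lo - {W}. \<not> movable V E f z X"
    and same: "\<forall>i\<in>accessible f lo - {W}. color_class V f' i = color_class V f i"
    and cl_W: "color_class V f' W = insert y (color_class V f W - {z})"
  shows "accessible f lo \<subseteq> accessible f' lo"
proof -
  define A where "A = accessible f lo"
  have "A - {W} \<subseteq> {..<s}" using accessible_subset unfolding A_def by blast
  have reach: "(rel_within (class_arc V E f') {..<s})\<^sup>*\<^sup>* U lo" if "U \<in> A" "U \<noteq> W" for U
  proof -
    have "(rel_within (class_arc V E f') (A - {W}))\<^sup>*\<^sup>* U lo"
      using rtranclp_rel_within_class_arc_transfer[OF terminal_reach[OF W] same] that
      unfolding A_def by blast
    then show ?thesis by (rule rtranclp_rel_within_mono[OF \<open>A - {W} \<subseteq> {..<s}\<close>])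
  qed
  have "(rel_within (class_arc V E f') {..<s})\<^sup>*\<^sup>* W lo"
  proof (cases "W = lo")
    case False
    have "W \<in> A" using W unfolding terminal_def A_def by blast
    then have "(rel_within (class_arc V E f) {..<s})\<^sup>*\<^sup>* W lo" unfolding A_def accessible_def by blast
    then obtain X where X: "rel_within (class_arc V E f) {..<s} W X"
      "(rel_within (class_arc V E f) {..<s})\<^sup>*\<^sup>* X lo"
      using False by (blast elim: converse_rtranclpE)
    then have "X \<in> A" unfolding A_def accessible_def rel_within_def by blast
    obtain w where w: "w \<in> color_class V f W" "movable V E f w X" "X \<noteq> W"
      using X(1) unfolding rel_within_def class_arc_def by blast
    have "w \<noteq> z" using w stuck \<open>X \<in> A\<close> unfolding A_def by blast
    then have "class_arc V E f' W X" using w same \<open>X \<in> A\<close> cl_W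
      unfolding class_arc_def movable_def A_def by auto
    then have "rel_within (class_arc V E f') {..<s} W X"
      using X(1) unfolding rel_within_def by blast
    then show ?thesis using reach[OF \<open>X \<in> A\<close> \<open>X \<noteq> W\<close>] by (rule converse_rtranclp_into_rtranclp)
  qed simp
  then show ?thesis using reach accessible_subset unfolding A_def accessible_def by blast
qed

lemma solo_exchange_nearly_equitable:
  assumes ne: "nearly_equitable V E s m f lo hi" and hi: "hi \<notin> accessible f lo"
    and W: "W \<in> accessible f lo" and y: "solo f lo W z y"
    and stuck: "\<forall>X\<in>accessible f lo - {W}. \<not> movable V E f z X"
  shows "\<exists>f' c. nearly_equitable V E s m f' lo c
    \<and> (\<forall>i\<in>accessible f lo - {W}. color_class V f' i = color_class V f i)
    \<and> color_class V f' W = insert y (color_class V f W - {z})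
    \<and> (\<forall>v\<in>V. f v \<notin> accessible f lo \<longrightarrow> v \<noteq> y \<longrightarrow> f' v \<notin> accessible f lo)"
proof -
  define A where "A = accessible f lo"
  obtain f' c where c: "c \<in> {..<s} - A" and f': "proper_coloring E f'" "\<forall>v\<in>V. f' v < s"
    and same: "\<forall>i\<in>A - {W}. color_class V f' i = color_class V f i"
    and cl_W: "color_class V f' W = insert y (color_class V f W - {z})"
    and card_out: "\<forall>i\<in>{..<s} - A. card (color_class V f' i) = m + of_bool (i = c)"
    and out: "\<forall>v\<in>V. f v \<notin> A \<longrightarrow> v \<noteq> y \<longrightarrow> f' v \<notin> A"
    using solo_exchange_coloring[OF ne hi W y stuck] unfolding A_def by blast
  have z: "z \<in> color_class V f W" and "y \<notin> color_class V f W - {z}"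
    using y W unfolding solo_def color_class_def by auto
  then have card_W: "card (color_class V f' W) = card (color_class V f W)"
    using cl_W card_Suc_Diff1[OF finite_color_class[OF finite_V] z] finite_color_class[OF finite_V]
    by simp
  have lo: "lo < s" "lo \<in> A" using ne lo_accessible unfolding nearly_equitable_def A_def by auto
  have "card (color_class V f' i) + of_bool (i = lo) = m + of_bool (i = c)" if "i < s" for i
  proof (cases "i \<in> A")
    case True
    have "card (color_class V f' i) = card (color_class V f i)"
      using True same card_W by (cases "i = W") auto
    moreover have "i \<noteq> hi" "i \<noteq> c" using True c hi unfolding A_def by auto
    ultimately show ?thesis using ne that unfolding nearly_equitable_def by simp
  next
    case False
    then show ?thesis using card_out that lo by auto
  qed
  then have "nearly_equitable V E s m f' lo c" using f' lo c unfolding nearly_equitable_def by auto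
  then show ?thesis using same cl_W out unfolding A_def by blast
qed

text \<open>If \<open>z\<close> cannot move and has two nonadjacent solo neighbours \<open>y\<close> and \<open>y'\<close>, exchanging \<open>y\<close>
  for \<open>z\<close> makes the new class of \<open>y'\<close> accessible, since \<open>y'\<close> can then move to \<open>W\<close>.\<close>
lemma solo_exchange:
  assumes ne: "nearly_equitable V E s m f lo hi" and hi: "hi \<notin> accessible f lo"
    and W: "terminal f lo W" and y: "solo f lo W z y" and y': "solo f lo W z y'" "y' \<noteq> y" "\<not> E y' y"
    and stuck: "\<forall>X\<in>accessible f lo - {W}. \<not> movable V E f z X"
  shows "\<exists>f' hi'. nearly_equitable V E s m f' lo hi'
    \<and> card ({..<s} - accessible f' lo) < card ({..<s} - accessible f lo)"
proof -
  define A where "A = accessible f lo"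
  have WA: "W \<in> A" using W unfolding terminal_def A_def by blast
  obtain f' c where ne': "nearly_equitable V E s m f' lo c"
    and same: "\<forall>i\<in>A - {W}. color_class V f' i = color_class V f i"
    and cl_W: "color_class V f' W = insert y (color_class V f W - {z})"
    and out: "\<forall>v\<in>V. f v \<notin> A \<longrightarrow> v \<noteq> y \<longrightarrow> f' v \<notin> A"
    using solo_exchange_nearly_equitable[OF ne hi _ y stuck] WA unfolding A_def by blast
  have z: "z \<in> color_class V f W" using y unfolding solo_def by blast
  have A_sub: "A \<subseteq> accessible f' lo"
    using accessible_subset_exchange[OF W z stuck same[unfolded A_def] cl_W] unfolding A_def .
  have y'V: "y' \<in> V" "f' y' \<notin> A" "f' y' < s"
    using y' out ne' unfolding solo_def A_def nearly_equitable_def by auto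
  have "movable V E f' y' W"
    using y' cl_W unfolding solo_def movable_def by auto
  then have "rel_within (class_arc V E f') {..<s} (f' y') W"
    using y'V WA accessible_subset unfolding rel_within_def class_arc_def color_class_def A_def
    by auto
  moreover have "(rel_within (class_arc V E f') {..<s})\<^sup>*\<^sup>* W lo"
    using A_sub WA unfolding accessible_def by blast
  ultimately have "f' y' \<in> accessible f' lo"
    using y'V(3) converse_rtranclp_into_rtranclp unfolding accessible_def by fastforce
  then have "{..<s} - accessible f' lo \<subseteq> {..<s} - A - {f' y'}" using A_sub by auto
  then have "card ({..<s} - accessible f' lo) \<le> card ({..<s} - A - {f' y'})" by (intro card_mono) auto
  also have "\<dots> < card ({..<s} - A)" using y'V by (intro card_Diff1_less) auto
  finally show ?thesis using ne' unfolding A_def by blast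
qed

text \<open>Let \<open>b\<close> be the number of inaccessible classes. By \<open>ex_vertex_many_neighbours\<close>, some vertex
  of a terminal class has at least \<open>2 b + 1\<close> neighbours outside the accessible classes, hence it
  can move to at least \<open>b + 1\<close> accessible classes.\<close>
lemma terminal_out_degree:
  assumes ne: "nearly_equitable V E s m f lo hi" and hi: "hi \<notin> accessible f lo"
    and W: "terminal f lo W"
    and no_move: "\<And>z y X. solo f lo W z y \<Longrightarrow> X \<in> accessible f lo - {W} \<Longrightarrow> \<not> movable V E f z X"
  shows "card ({..<s} - accessible f lo) + 1 \<le> card {X \<in> accessible f lo - {W}. class_arc V E f W X}"
proof -
  define A where "A = accessible f lo"
  define B where "B = {v \<in> V. f v \<notin> A}"
  define b where "b = card ({..<s} - A)"
  have range: "\<forall>v\<in>V. f v < s" using ne unfolding nearly_equitable_def by blast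
  have WA: "W \<in> A" using W unfolding terminal_def A_def by blast
  have "card (color_class V f W) + of_bool (W = lo) = m"
    using ne WA hi accessible_subset unfolding nearly_equitable_def A_def by fastforce
  then have cW: "card (color_class V f W) \<le> m" by simp
  have cB: "b * m < card B"
    using card_outside_accessible[OF ne hi] unfolding A_def B_def b_def by simp
  have cov: "\<forall>y\<in>B. \<exists>z\<in>color_class V f W. E y z"
    using not_movable_into_accessible[OF range] WA unfolding B_def A_def movable_def by blast
  have solo_le: "card {y \<in> B. E z y} \<le> b"
    if "z \<in> color_class V f W" "y \<in> B" "{u \<in> color_class V f W. E y u} = {z}" for z y
  proof -
    have "solo f lo W z y" using that unfolding solo_def B_def A_def by blast
    moreover have "z \<in> V" using that(1) unfolding color_class_def by blast
    ultimately have "card {u \<in> V. E z u \<and> f u \<notin> A} \<le> b"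
      using card_neighbours_outside_le_stuck[OF range WA[unfolded A_def]] no_move
      unfolding b_def A_def by blast
    moreover have "{y \<in> B. E z y} = {u \<in> V. E z u \<and> f u \<notin> A}" unfolding B_def by auto
    ultimately show ?thesis by simp
  qed
  have "finite B" using finite_V unfolding B_def by simp
  then obtain z where z: "z \<in> color_class V f W" "2 * b + 1 \<le> card {y \<in> B. E z y}"
    using ex_vertex_many_neighbours[OF finite_color_class[OF finite_V] _ cW cB
        simple_graph_sym[OF graph] cov] solo_le by blast
  have "{y \<in> B. E z y} = {u \<in> V. E z u \<and> f u \<notin> A}" unfolding B_def by auto
  moreover have "z \<in> V" using z(1) unfolding color_class_def by blast
  ultimately have "2 * b + 1 \<le> card {i \<in> A - {W}. movable V E f z i} + b"
    using z(2) card_neighbours_outside_le[OF range accessible_subset WA[unfolded A_def], of z]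
    unfolding b_def A_def by simp
  also have "card {i \<in> A - {W}. movable V E f z i} \<le> card {X \<in> A - {W}. class_arc V E f W X}"
    using z(1) finite_accessible unfolding class_arc_def A_def by (intro card_mono) auto
  finally show ?thesis unfolding b_def A_def by simp
qed

lemma many_terminal_classes:
  assumes ne: "nearly_equitable V E s m f lo hi" and hi: "hi \<notin> accessible f lo"
    and no_move: "\<And>W z y X. terminal f lo W \<Longrightarrow> solo f lo W z y \<Longrightarrow> X \<in> accessible f lo - {W} \<Longrightarrow>
      \<not> movable V E f z X"
  shows "card ({..<s} - accessible f lo) + 1 \<le> card {W. terminal f lo W}"
proof -
  have "lo \<in> accessible f lo" using ne lo_accessible unfolding nearly_equitable_def by blast
  then have "card ({..<s} - accessible f lo) + 1
      \<le> card {W \<in> accessible f lo. cut_off (class_arc V E f) (accessible f lo) lo W = {}}"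
    using terminal_out_degree[OF ne hi] no_move rtranclp_within_accessible
    by (intro card_terminal_ge finite_accessible) (auto simp: terminal_def)
  also have "{W \<in> accessible f lo. cut_off (class_arc V E f) (accessible f lo) lo W = {}} =
      {W. terminal f lo W}"
    unfolding terminal_def by blast
  finally show ?thesis .
qed

lemma card_solo_neighbours_ge:
  assumes ne: "nearly_equitable V E s m f lo hi" and y: "y \<in> V" "f y \<notin> accessible f lo"
  shows "card {W. terminal f lo W} + 1 + card {u \<in> V. E y u \<and> f u \<notin> accessible f lo}
    \<le> card {z \<in> V. terminal f lo (f z) \<and> solo f lo (f z) z y} + card ({..<s} - accessible f lo)"
proof -
  define A where "A = accessible f lo"
  define T where "T = {W. terminal f lo W}"
  define N where "N = {u \<in> V. E y u \<and> f u \<in> A}"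
  have range: "\<forall>v\<in>V. f v < s" using ne unfolding nearly_equitable_def by blast
  have TA: "T \<subseteq> A" unfolding T_def A_def terminal_def by blast
  have "\<forall>i\<in>A. N \<inter> color_class V f i \<noteq> {}"
    using not_movable_into_accessible[OF range y] unfolding N_def A_def movable_def color_class_def
    by blast
  then have "card A + card T \<le> card N + card {z \<in> V. f z \<in> T \<and> N \<inter> color_class V f (f z) = {z}}"
    using finite_V finite_accessible TA unfolding A_def by (intro card_classes_hit) (auto simp: N_def A_def)
  also have "{z \<in> V. f z \<in> T \<and> N \<inter> color_class V f (f z) = {z}} =
      {z \<in> V. terminal f lo (f z) \<and> solo f lo (f z) z y}"
  proof -
    have "N \<inter> color_class V f (f z) = {u \<in> color_class V f (f z). E y u}" if "f z \<in> A" for z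
      using that unfolding N_def color_class_def by auto
    then show ?thesis using TA y unfolding T_def solo_def A_def by auto
  qed
  finally have "card A + card T \<le> card N + card {z \<in> V. terminal f lo (f z) \<and> solo f lo (f z) z y}" .
  moreover have "card N + card {u \<in> V. E y u \<and> f u \<notin> A} < s"
    using degree_split[OF finite_V, of E y "\<lambda>u. f u \<in> A"] degree_less y(1) unfolding N_def by fastforce
  moreover have "s = card A + card ({..<s} - A)"
    using card_Diff_subset[OF finite_accessible accessible_subset] card_mono[OF _ accessible_subset]
    unfolding A_def by simp
  ultimately show ?thesis unfolding T_def A_def by linarith
qed

lemma card_terminal_vertices_le:
  assumes ne: "nearly_equitable V E s m f lo hi" and hi: "hi \<notin> accessible f lo"
  shows "card {v \<in> V. terminal f lo (f v)} \<le> card {W. terminal f lo W} * m"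
proof -
  have terminal_A: "{W. terminal f lo W} \<subseteq> accessible f lo" unfolding terminal_def by blast
  then have fin: "finite {W. terminal f lo W}" using finite_accessible finite_subset by blast
  have "card {v \<in> V. terminal f lo (f v)} = (\<Sum>i\<in>{W. terminal f lo W}. card (color_class V f i))"
    using card_colored_in[OF finite_V fin, of f] by simp
  also have "\<dots> \<le> (\<Sum>i\<in>{W. terminal f lo W}. m)"
  proof (rule sum_mono)
    fix i assume "i \<in> {W. terminal f lo W}"
    then have "i \<noteq> hi" "i < s" using terminal_A hi accessible_subset by auto
    then show "card (color_class V f i) \<le> m" using ne unfolding nearly_equitable_def by fastforce
  qed
  finally show ?thesis by simp
qed

lemma card_solo_le:
  assumes "solo f lo W z y" "\<forall>y'. solo f lo W z y' \<longrightarrow> y' \<noteq> y \<longrightarrow> E y y'"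
  shows "card {y'. solo f lo W z y'} \<le> card {u \<in> V. E y u \<and> f u \<notin> accessible f lo} + 1"
proof -
  have sub: "{y'. solo f lo W z y'} \<subseteq> {v \<in> V. f v \<notin> accessible f lo}" unfolding solo_def by auto
  with assms(2) have "{y'. solo f lo W z y'} - {y} \<subseteq> {u \<in> V. E y u \<and> f u \<notin> accessible f lo}"
    by blast
  then have "card ({y'. solo f lo W z y'} - {y}) \<le> card {u \<in> V. E y u \<and> f u \<notin> accessible f lo}"
    using finite_V by (intro card_mono) auto
  moreover have "finite {y'. solo f lo W z y'}" using sub by (rule finite_subset) (simp add: finite_V)
  ultimately show ?thesis using assms(1) by (simp add: card_Diff_singleton)
qed

text \<open>The final counting argument of Kierstead and Kostochka, weighting the pairs of a solo vertex
  and its unique neighbour in a terminal class.\<close>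
lemma card_outside_accessible_le:
  assumes ne: "nearly_equitable V E s m f lo hi" and hi: "hi \<notin> accessible f lo"
    and no_move: "\<And>W z y X. terminal f lo W \<Longrightarrow> solo f lo W z y \<Longrightarrow> X \<in> accessible f lo - {W} \<Longrightarrow>
      \<not> movable V E f z X"
    and no_exchange: "\<And>W z y y'. terminal f lo W \<Longrightarrow> solo f lo W z y \<Longrightarrow> solo f lo W z y' \<Longrightarrow>
      y \<noteq> y' \<Longrightarrow> E y y'"
  shows "card {v \<in> V. f v \<notin> accessible f lo} \<le> card ({..<s} - accessible f lo) * m"
proof -
  define A where "A = accessible f lo"
  define B where "B = {v \<in> V. f v \<notin> A}"
  define T where "T = {v \<in> V. terminal f lo (f v)}"
  define S where "S z = {y. solo f lo (f z) z y}" for z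
  define d where "d y = card {u \<in> B. E y u}" for y
  define t where "t = card {W. terminal f lo W}"
  define b where "b = card ({..<s} - A)"
  have range: "\<forall>v\<in>V. f v < s" using ne unfolding nearly_equitable_def by blast
  have finB: "finite B" using finite_V unfolding B_def by simp
  have d: "d y = card {u \<in> V. E y u \<and> f u \<notin> accessible f lo}" for y
    unfolding d_def B_def A_def by (rule arg_cong[where f = card]) auto
  have "card T \<le> t * m" using card_terminal_vertices_le[OF ne hi] unfolding T_def t_def .
  moreover have "1 \<le> b" "b + 1 \<le> t"
    using ne hi many_terminal_classes[OF ne hi no_move]
    unfolding nearly_equitable_def b_def t_def A_def by (auto simp: Suc_le_eq card_gt_0_iff)
  moreover have "\<forall>z\<in>T. S z \<subseteq> B" unfolding S_def B_def solo_def A_def by auto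
  moreover have "\<forall>y\<in>B. t + 1 + d y \<le> card {z \<in> T. y \<in> S z} + b"
  proof
    fix y assume "y \<in> B"
    then have "{z \<in> T. y \<in> S z} = {z \<in> V. terminal f lo (f z) \<and> solo f lo (f z) z y}"
      unfolding B_def T_def S_def A_def by auto
    then show "t + 1 + d y \<le> card {z \<in> T. y \<in> S z} + b"
      using card_solo_neighbours_ge[OF ne] \<open>y \<in> B\<close> unfolding t_def d b_def B_def A_def by simp
  qed
  moreover have "\<forall>y\<in>B. d y + 1 \<le> b"
    using degree_outside_accessible_less[OF range] unfolding d b_def B_def A_def by fastforce
  moreover have "\<forall>z\<in>T. \<forall>y\<in>S z. card (S z) \<le> d y + 1"
  proof (intro ballI)
    fix z y assume "z \<in> T" "y \<in> S z"
    then show "card (S z) \<le> d y + 1"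
      using card_solo_le[of f lo "f z" z y] no_exchange unfolding S_def T_def d by blast
  qed
  ultimately have "card B \<le> b * m"
    using card_le_by_weights[OF _ finB, of T t m b S d] finite_V unfolding T_def by fastforce
  then show ?thesis unfolding B_def b_def A_def by (simp add: mult.commute)
qed

lemma nearly_equitable_step:
  assumes ne: "nearly_equitable V E s m f lo hi"
  shows "(\<exists>g. equitable_coloring V E s m g) \<or> (\<exists>f' hi'. nearly_equitable V E s m f' lo hi'
    \<and> card ({..<s} - accessible f' lo) < card ({..<s} - accessible f lo))"
proof (cases "hi \<in> accessible f lo")
  case True
  then show ?thesis using equitable_if_nearly_equitable_reach[OF graph ne]
    unfolding accessible_def by blast
next
  case hi: False
  show ?thesis
  proof (cases "\<exists>W z y X. terminal f lo W \<and> solo f lo W z y \<and> X \<in> accessible f lo - {W}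
      \<and> movable V E f z X")
    case True
    then obtain W z y X where "terminal f lo W" and y: "solo f lo W z y"
      and "X \<in> accessible f lo" "X \<noteq> W" "movable V E f z X" by blast
    then obtain g where "proper_coloring E g" "\<forall>v\<in>V. g v < s"
      "\<forall>v\<in>V. g v \<in> accessible f lo \<longleftrightarrow> f v \<in> accessible f lo \<or> v = y"
      "\<forall>i\<in>accessible f lo. card (color_class V g i) = m"
      using solo_move_and_shift[OF ne hi] by blast
    moreover have "y \<in> V" "f y \<notin> accessible f lo" using y unfolding solo_def by blast+
    ultimately show ?thesis using equitable_if_accessible_classes_full[OF ne hi] by blast
  next
    case no_move: False
    show ?thesis
    proof (cases "\<exists>W z y y'. terminal f lo W \<and> solo f lo W z y \<and> solo f lo W z y' \<and> y \<noteq> y'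
        \<and> \<not> E y y'")
      case True
      then obtain W z y y' where "terminal f lo W" "solo f lo W z y" "solo f lo W z y'" "y' \<noteq> y"
        "\<not> E y' y" using simple_graph_sym[OF graph] by blast
      then show ?thesis using solo_exchange[OF ne hi] no_move by blast
    next
      case False
      then have "card {v \<in> V. f v \<notin> accessible f lo} \<le> card ({..<s} - accessible f lo) * m"
        using no_move by (intro card_outside_accessible_le[OF ne hi]) blast+
      then show ?thesis using card_outside_accessible[OF ne hi] by simp
    qed
  qed
qed

lemma equitable_if_nearly_equitable:
  "nearly_equitable V E s m f lo hi \<Longrightarrow> \<exists>g. equitable_coloring V E s m g"
proof (induction "card ({..<s} - accessible f lo)" arbitrary: f hi rule: less_induct)
  case less
  then show ?case using nearly_equitable_step[OF less.prems] by blast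
qed

lemma card_other_colored_neighbours_less:
  assumes "E x y" "f x = f y" "f x < s"
  shows "card {u \<in> V. E x u \<and> f u \<noteq> f x} < card ({..<s} - {f x})"
proof -
  have xV: "x \<in> V" "y \<in> V" using simple_graph_adj_in[OF graph assms(1)] by auto
  have "{u \<in> V. E x u \<and> f u \<noteq> f x} \<subseteq> {u \<in> V. E x u} - {y}" "y \<in> {u \<in> V. E x u}"
    using assms xV by auto
  then have "card {u \<in> V. E x u \<and> f u \<noteq> f x} \<le> card ({u \<in> V. E x u} - {y})"
    using finite_V by (intro card_mono) auto
  also have "\<dots> = degree V E x - 1"
    unfolding degree_def using finite_V \<open>y \<in> {u \<in> V. E x u}\<close> by (simp add: card_Diff_singleton)
  finally have "card {u \<in> V. E x u \<and> f u \<noteq> f x} \<le> degree V E x - 1" .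
  moreover have "0 < degree V E x"
    unfolding degree_def using finite_V \<open>y \<in> {u \<in> V. E x u}\<close> by (auto simp: card_gt_0_iff)
  moreover have "degree V E x < s" using degree_less xV by blast
  moreover have "card ({..<s} - {f x}) = s - 1" using assms(3) by simp
  ultimately show ?thesis by linarith
qed

text \<open>Reinserting an edge \<open>x y\<close> into an equitably coloured graph: if \<open>x\<close> and \<open>y\<close> got the same
  colour, \<open>x\<close> has fewer than \<open>s - 1\<close> neighbours of other colours, so it can be moved to a colour
  class containing none of its neighbours, which yields a nearly equitable colouring.\<close>
lemma equitable_coloring_add_edge:
  assumes xy: "E x y" and f: "equitable_coloring V (\<lambda>u v. E u v \<and> {u, v} \<noteq> {x, y}) s m f"
  shows "\<exists>g. equitable_coloring V E s m g"
proof (cases "f x = f y")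
  case False
  have "f u \<noteq> f v" if "E u v" for u v
  proof (cases "{u, v} = {x, y}")
    case True
    then show ?thesis using False by (auto simp: doubleton_eq_iff)
  next
    case False
    then show ?thesis using f that unfolding equitable_coloring_def proper_coloring_def by blast
  qed
  then show ?thesis using f unfolding equitable_coloring_def proper_coloring_def by blast
next
  case True
  have range: "\<forall>v\<in>V. f v < s" and card_f: "\<forall>i<s. card (color_class V f i) = m"
    and proper: "\<forall>u v. E u v \<and> {u, v} \<noteq> {x, y} \<longrightarrow> f u \<noteq> f v"
    using f unfolding equitable_coloring_def proper_coloring_def by blast+
  have xV: "x \<in> V" "y \<in> V" using simple_graph_adj_in[OF graph xy] by auto
  have "card {u \<in> V. E x u \<and> f u \<noteq> f x} < card ({..<s} - {f x})"
    using card_other_colored_neighbours_less[OF xy True] range xV by blast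
  moreover have "finite {u \<in> V. E x u \<and> f u \<noteq> f x}" using finite_V by simp
  ultimately obtain j where j: "j < s" "j \<noteq> f x" "\<forall>u\<in>V. E x u \<and> f u \<noteq> f x \<longrightarrow> f u \<noteq> j"
    using ex_unused_color[of "{..<s} - {f x}" "{u \<in> V. E x u \<and> f u \<noteq> f x}" f] by auto
  define f1 where "f1 = f(x := j)"
  have "f1 u \<noteq> f1 v" if "E u v" for u v
  proof -
    have "u \<noteq> v" "u \<in> V" "v \<in> V"
      using that simple_graph_irrefl[OF graph] simple_graph_adj_in[OF graph] by blast+
    moreover have "f w \<noteq> j" if "E x w" "w \<in> V" for w
      using j that by (cases "f w = f x") auto
    moreover have "E x u" if "v = x" using simple_graph_sym[OF graph \<open>E u v\<close>] that by simp
    moreover have "f u \<noteq> f v" if "u \<noteq> x" "v \<noteq> x" using proper \<open>E u v\<close> that by blast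
    ultimately show ?thesis using \<open>E u v\<close> unfolding f1_def by (cases "u = x"; cases "v = x") auto
  qed
  moreover have "card (color_class V f1 i) + of_bool (i = f x) = m + of_bool (i = j)" if "i < s" for i
    using card_color_class_upd[where f = f, OF finite_V xV(1) refl j(2)[symmetric], of i] card_f that
    unfolding f1_def by simp
  ultimately have "nearly_equitable V E s m f1 (f x) j"
    using range j xV unfolding nearly_equitable_def proper_coloring_def f1_def by auto
  then show ?thesis by (rule equitable_if_nearly_equitable)
qed

end

section \<open>The Hajnal-Szemeredi theorem\<close>

lemma ex_equipartition:
  assumes "finite V" "card V = s * m"
  shows "\<exists>g. (\<forall>v\<in>V. g v < s) \<and> (\<forall>i<s. card (color_class V g i) = m)"
  using assms
proof (induction s arbitrary: V)
  case (Suc s)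
  obtain X where X: "X \<subseteq> V" "card X = m"
    using obtain_subset_with_card_n[of m V] Suc.prems by auto
  then have "card (V - X) = s * m" using Suc.prems by (simp add: card_Diff_subset finite_subset)
  then obtain g where g: "\<forall>v\<in>V - X. g v < s" "\<forall>i<s. card (color_class (V - X) g i) = m"
    using Suc.IH Suc.prems(1) by blast
  define g' where "g' v = (if v \<in> X then s else g v)" for v
  have "color_class V g' i = (if i = s then X else color_class (V - X) g i)" if "i < Suc s" for i
    using that g(1) X(1) unfolding g'_def color_class_def by auto
  then have "card (color_class V g' i) = m" if "i < Suc s" for i
    using that g(2) X(2) by (cases "i = s") auto
  moreover have "g' v < Suc s" if "v \<in> V" for v using that g(1) less_SucI unfolding g'_def by force
  ultimately show ?case by blast
qed simp

lemma simple_graph_delete_edge: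
  assumes G: "simple_graph V E" and xy: "E x y"
  defines "E' \<equiv> \<lambda>u v. E u v \<and> {u, v} \<noteq> {x, y}"
  shows "simple_graph V E'" and "\<forall>v\<in>V. degree V E' v \<le> degree V E v"
    and "card {(u, v) \<in> V \<times> V. E' u v} < card {(u, v) \<in> V \<times> V. E u v}"
proof -
  have "{v, u} = {u, v}" for u v :: 'a by blast
  then show "simple_graph V E'" using G unfolding simple_graph_def E'_def by metis
  show "\<forall>v\<in>V. degree V E' v \<le> degree V E v"
    unfolding degree_def E'_def using simple_graph_finite[OF G] by (intro ballI card_mono) auto
  show "card {(u, v) \<in> V \<times> V. E' u v} < card {(u, v) \<in> V \<times> V. E u v}"
  proof (rule psubset_card_mono)
    show "finite {(u, v) \<in> V \<times> V. E u v}"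
      by (rule finite_subset[of _ "V \<times> V"]) (use simple_graph_finite[OF G] in auto)
    have "(x, y) \<in> {(u, v) \<in> V \<times> V. E u v}" "(x, y) \<notin> {(u, v) \<in> V \<times> V. E' u v}"
      using xy simple_graph_adj_in[OF G xy] unfolding E'_def by auto
    then show "{(u, v) \<in> V \<times> V. E' u v} \<subset> {(u, v) \<in> V \<times> V. E u v}" unfolding E'_def by blast
  qed
qed

text \<open>Induction on the number of vertices, which provides the equitable recolourings of proper
  subsets needed in \<open>equitable_induction_step\<close>, and inside it on the number of edges.\<close>
theorem hajnal_szemeredi:
  assumes "simple_graph V E" "\<forall>v\<in>V. degree V E v < s" "card V = s * m"
  shows "\<exists>g. equitable_coloring V E s m g"
  using assms
proof (induction "card V" arbitrary: V E s m rule: less_induct)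
  case less
  have IH: "\<exists>g. equitable_coloring V' E' s' m' g"
    if "V' \<subset> V" "simple_graph V' E'" "\<forall>v\<in>V'. degree V' E' v < s'" "card V' = s' * m'"
    for V' E' s' m'
    using less.hyps[OF psubset_card_mono[OF simple_graph_finite[OF less.prems(1)] that(1)]] that(2-4)
    by blast
  show ?case
    using less.prems
  proof (induction "card {(u, v) \<in> V \<times> V. E u v}" arbitrary: E rule: less_induct)
    case (less E)
    then interpret equitable_induction_step V E s m
      using IH by unfold_locales blast+
    show ?case
    proof (cases "\<exists>x y. E x y")
      case False
      then show ?thesis using ex_equipartition[OF finite_V less.prems(3)]
        unfolding equitable_coloring_def proper_coloring_def by blast
    next
      case True
      then obtain x y where xy: "E x y" by blast
      note E' = simple_graph_delete_edge[OF graph xy]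
      have "\<forall>v\<in>V. degree V (\<lambda>u v. E u v \<and> {u, v} \<noteq> {x, y}) v < s"
        using E'(2) degree_less le_less_trans by blast
      then obtain f where "equitable_coloring V (\<lambda>u v. E u v \<and> {u, v} \<noteq> {x, y}) s m f"
        using less.hyps[OF E'(3) E'(1)] less.prems(3) by blast
      then show ?thesis using equitable_coloring_add_edge[OF xy] by blast
    qed
  qed
qed

section \<open>Disjoint cliques\<close>

text \<open>For \<open>|V| \<le> s m\<close>, pad the graph with isolated vertices up to exactly \<open>s m\<close> vertices.\<close>
lemma hajnal_szemeredi_le:
  assumes G: "simple_graph V E" and deg: "\<forall>v\<in>V. degree V E v < s" and card_V: "card V \<le> s * m"
  shows "\<exists>f. (\<forall>v\<in>V. f v < s) \<and> proper_coloring E f \<and> (\<forall>i<s. card (color_class V f i) \<le> m)"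
proof -
  define t where "t = s * m - card V"
  define V' :: "('a + nat) set" where "V' = Inl ` V \<union> Inr ` {..<t}"
  define E' :: "'a + nat \<Rightarrow> 'a + nat \<Rightarrow> bool"
    where "E' p q \<longleftrightarrow> (\<exists>u v. p = Inl u \<and> q = Inl v \<and> E u v)" for p q
  have finite: "finite V" using simple_graph_finite[OF G] .
  have "simple_graph V' E'"
    using G unfolding simple_graph_def V'_def E'_def by auto
  moreover have "degree V' E' p < s" if "p \<in> V'" for p
  proof (cases p)
    case (Inl u)
    then have "{q \<in> V'. E' p q} = Inl ` {v \<in> V. E u v}" unfolding V'_def E'_def by auto
    then show ?thesis using deg that Inl unfolding degree_def V'_def by (auto simp: card_image)
  next
    case (Inr a)
    then have "0 < t" using that unfolding V'_def by auto
    then have "0 < s" unfolding t_def by (cases s) auto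
    then show ?thesis using Inr unfolding degree_def E'_def by simp
  qed
  moreover have "card V' = s * m"
  proof -
    have "Inl ` V \<inter> Inr ` {..<t} = {}" by auto
    then have "card V' = card (Inl ` V :: ('a + nat) set) + card (Inr ` {..<t} :: ('a + nat) set)"
      unfolding V'_def using finite by (intro card_Un_disjoint) auto
    then show ?thesis using card_V unfolding t_def by (simp add: card_image)
  qed
  ultimately obtain g where g: "equitable_coloring V' E' s m g"
    using hajnal_szemeredi by blast
  have sub: "Inl ` color_class V (g \<circ> Inl) i \<subseteq> color_class V' g i" for i
    unfolding color_class_def V'_def by auto
  have fin: "finite (color_class V' g i)" for i
    using finite unfolding V'_def by (intro finite_color_class) simp
  have "card (Inl ` color_class V (g \<circ> Inl) i :: ('a + nat) set) \<le> card (color_class V' g i)" for i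
    by (rule card_mono[OF fin sub])
  then have "card (color_class V (g \<circ> Inl) i) \<le> card (color_class V' g i)" for i
    by (simp add: card_image)
  moreover have "\<forall>v\<in>V. (g \<circ> Inl) v < s" "proper_coloring E (g \<circ> Inl)"
    using g unfolding equitable_coloring_def proper_coloring_def V'_def E'_def by auto
  ultimately show ?thesis using g unfolding equitable_coloring_def by metis
qed

text \<open>Colour the complement of \<open>G[W]\<close> with \<open>d\<close> classes of at most \<open>k + 1\<close> vertices; the classes
  are cliques of \<open>G\<close>, and at least \<open>|W| - d k\<close> of them have exactly \<open>k + 1\<close> vertices.\<close>
lemma ex_disjoint_cliques:
  assumes G: "simple_graph V E" and W: "W \<subseteq> V" "card W \<le> d * (k + 1)"
    and non_adj: "\<forall>v\<in>W. card {u \<in> W - {v}. \<not> E v u} < d"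
  shows "\<exists>C. (\<forall>S\<in>C. is_clique_copy V E (k + 1) S) \<and> (\<forall>S\<in>C. \<forall>T\<in>C. S \<noteq> T \<longrightarrow> S \<inter> T = {})
    \<and> int (card W) - int d * int k \<le> int (card C)"
proof -
  define H where "H u v \<longleftrightarrow> u \<in> W \<and> v \<in> W \<and> u \<noteq> v \<and> \<not> E u v" for u v
  have finW: "finite W" using simple_graph_finite[OF G] W(1) finite_subset by blast
  have "simple_graph W H"
    using finW simple_graph_sym[OF G] unfolding simple_graph_def H_def by blast
  moreover have "{u \<in> W. H v u} = {u \<in> W - {v}. \<not> E v u}" if "v \<in> W" for v
    using that unfolding H_def by auto
  then have "\<forall>v\<in>W. degree W H v < d" using non_adj unfolding degree_def by simp
  ultimately obtain f where f: "\<forall>v\<in>W. f v < d" "proper_coloring H f"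
    "\<forall>i<d. card (color_class W f i) \<le> k + 1"
    using hajnal_szemeredi_le W(2) by blast
  define F where "F = {i. i < d \<and> card (color_class W f i) = k + 1}"
  define C where "C = color_class W f ` F"
  have "\<forall>S\<in>C. is_clique_copy V E (k + 1) S"
    using W(1) f(2) unfolding C_def is_clique_copy_def F_def color_class_def proper_coloring_def H_def
    by (auto, metis)
  moreover have "\<forall>S\<in>C. \<forall>T\<in>C. S \<noteq> T \<longrightarrow> S \<inter> T = {}" unfolding C_def color_class_def by auto
  moreover have "finite F" unfolding F_def by simp
  moreover have "inj_on (color_class W f) F"
  proof (rule inj_onI)
    fix i j assume "i \<in> F" "j \<in> F" "color_class W f i = color_class W f j"
    moreover from \<open>i \<in> F\<close> obtain v where "v \<in> color_class W f i"
      unfolding F_def by fastforce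
    ultimately show "i = j" unfolding color_class_def by auto
  qed
  then have "card C = card F" unfolding C_def by (rule card_image)
  moreover have "card W \<le> d * k + card F"
  proof -
    have "{v \<in> W. f v \<in> {..<d}} = W" using f(1) by auto
    then have "card W = (\<Sum>i<d. card (color_class W f i))"
      using card_colored_in[OF finW, of "{..<d}" f] by simp
    also have "\<dots> \<le> (\<Sum>i<d. k + of_bool (i \<in> F))"
      using f(3) unfolding F_def by (intro sum_mono) (fastforce simp: le_Suc_eq)
    also have "\<dots> = d * k + card F" by (simp add: sum.distrib F_def Int_def)
    finally show ?thesis .
  qed
  then have "int (card W) \<le> int (d * k + card F)" by (simp only: of_nat_le_iff)
  then have "int (card W) - int d * int k \<le> int (card C)" using \<open>card C = card F\<close> by simp
  ultimately show ?thesis by blast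
qed

lemma card_non_neighbours_less:
  assumes G: "simple_graph V E" and v: "v \<in> V"
  shows "card {u \<in> V - {v}. \<not> E v u} < card V - min_degree V E"
proof -
  have "{u \<in> V. E v u} \<subset> V" using G v simple_graph_irrefl by fastforce
  then have "degree V E v < card V"
    unfolding degree_def using simple_graph_finite[OF G] by (rule psubset_card_mono[rotated])
  moreover have "min_degree V E \<le> degree V E v"
    using v simple_graph_finite[OF G] unfolding min_degree_def by simp
  moreover have "{u \<in> V. E v u} \<subseteq> V - {v}"
    using G v simple_graph_adj_in simple_graph_irrefl by fastforce
  moreover have "{u \<in> V - {v}. \<not> E v u} = (V - {v}) - {u \<in> V. E v u}" by auto
  ultimately show ?thesis
    using v simple_graph_finite[OF G] unfolding degree_def
    by (simp add: card_Diff_subset card_Diff_singleton)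
qed

lemma clique_count_arith_le:
  fixes k n D q :: int
  assumes "1 \<le> k" "(k + 1) * q \<le> n" "n - k * D \<le> q"
  shows "n \<le> D * (k + 1)"
proof -
  have "(k + 1) * (n - k * D) \<le> (k + 1) * q" using assms by (intro mult_left_mono) auto
  then have "k * n \<le> k * (D * (k + 1))" using assms(2) by (simp add: algebra_simps)
  then show ?thesis using assms(1) by simp
qed

lemma clique_count_arith_gt:
  fixes k n D q :: int
  assumes "1 \<le> k" "n \<le> (k + 1) * q + k" "q < n - k * D"
  shows "D \<le> q"
proof -
  have "k * D < k * (q + 1)" using assms(2,3) by (simp add: algebra_simps)
  then show ?thesis using assms(1) by simp
qed

text \<open>Apply \<open>ex_disjoint_cliques\<close> to \<open>V\<close> with \<open>d = D\<close> if this guarantees at most \<open>\<lfloor>n / (k + 1)\<rfloor>\<close>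
  cliques, and otherwise to \<open>(k + 1) \<lfloor>n / (k + 1)\<rfloor>\<close> vertices with \<open>d = \<lfloor>n / (k + 1)\<rfloor>\<close>.\<close>
lemma many_disjoint_cliques:
  assumes G: "simple_graph V E" and k: "1 \<le> k"
    and non_adj: "\<forall>v\<in>V. card {u \<in> V - {v}. \<not> E v u} < D"
  shows "\<exists>C. (\<forall>S\<in>C. is_clique_copy V E (k + 1) S) \<and> (\<forall>S\<in>C. \<forall>T\<in>C. S \<noteq> T \<longrightarrow> S \<inter> T = {})
    \<and> min (int (card V) - int k * int D) (int (card V div (k + 1))) \<le> int (card C)"
proof -
  define n where "n = card V"
  define Q where "Q = n div (k + 1)"
  have "n = (k + 1) * Q + n mod (k + 1)" unfolding Q_def by (rule mult_div_mod_eq[symmetric])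
  moreover have "n mod (k + 1) < k + 1" by simp
  ultimately have "(k + 1) * Q \<le> n" "n \<le> (k + 1) * Q + k" by linarith+
  then have Q: "(int k + 1) * int Q \<le> int n" "int n \<le> (int k + 1) * int Q + int k"
    by (metis of_nat_1 of_nat_add of_nat_le_iff of_nat_mult)+
  show ?thesis
  proof (cases "int n - int k * int D \<le> int Q")
    case True
    have "int n \<le> int D * (int k + 1)" using clique_count_arith_le[OF _ Q(1) True] k by simp
    then have "int n \<le> int (D * (k + 1))" by (simp add: algebra_simps)
    then have "card V \<le> D * (k + 1)" unfolding n_def by (simp only: of_nat_le_iff)
    with ex_disjoint_cliques[OF G order_refl this non_adj] show ?thesis
      unfolding n_def Q_def by (auto simp: mult.commute)
  next
    case False
    have "int D \<le> int Q" using clique_count_arith_gt[OF _ Q(2), of "int D"] False k by simp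
    have "Q * (k + 1) \<le> card V" using \<open>(k + 1) * Q \<le> n\<close> unfolding n_def by (simp add: mult.commute)
    then obtain W where W: "W \<subseteq> V" "card W = Q * (k + 1)" using obtain_subset_with_card_n by metis
    have "card {u \<in> W - {v}. \<not> E v u} < Q" if "v \<in> W" for v
    proof -
      have "card {u \<in> W - {v}. \<not> E v u} \<le> card {u \<in> V - {v}. \<not> E v u}"
        using W(1) simple_graph_finite[OF G] by (intro card_mono) auto
      then show ?thesis using non_adj W(1) that \<open>int D \<le> int Q\<close> by fastforce
    qed
    with ex_disjoint_cliques[OF G W(1) eq_imp_le[OF W(2)]] W(2) False show ?thesis
      unfolding n_def Q_def by (fastforce simp: algebra_simps)
  qed
qed

lemma min_degree_arith:
  fixes k n \<delta> :: nat
  assumes "1 \<le> k" "\<delta> \<le> n" "real (k - 1) * real n / real k \<le> real \<delta>"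
  shows "int k * int \<delta> - (int k - 1) * int n = int n - int k * int (n - \<delta>)"
    and "0 \<le> int n - int k * int (n - \<delta>)"
proof -
  show p: "int k * int \<delta> - (int k - 1) * int n = int n - int k * int (n - \<delta>)"
    using assms(2) by (simp add: algebra_simps)
  have "real (k - 1) * real n \<le> real \<delta> * real k" using assms(1,3) by (simp add: divide_le_eq)
  then have "(k - 1) * n \<le> \<delta> * k" by (simp flip: of_nat_mult)
  then have "int ((k - 1) * n) \<le> int (\<delta> * k)" by (simp only: of_nat_le_iff)
  then have "(int k - 1) * int n \<le> int k * int \<delta>" using assms(1) by (simp add: mult.commute)
  then show "0 \<le> int n - int k * int (n - \<delta>)" using p by simp
qed

theorem corollary2p5:
  fixes V :: "'a set" and E :: "'a \<Rightarrow> 'a \<Rightarrow> bool" and k n :: nat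
  assumes "simple_graph V E"
    and "k \<ge> 1"
    and "n = card V"
    and "n \<ge> k * (k + 1)"
    and "real (min_degree V E) \<ge> real (k - 1) * real n / real k"
  shows "\<exists>\<C>. (\<forall>S\<in>\<C>. is_clique_copy V E (k + 1) S)
             \<and> (\<forall>S\<in>\<C>. \<forall>T\<in>\<C>. S \<noteq> T \<longrightarrow> S \<inter> T = {})
             \<and> int (card \<C>) = min (int k * int (min_degree V E) - (int k - 1) * int n)
                                   (int (n div (k + 1)))"
proof -
  have G: "simple_graph V E" and k: "1 \<le> k" and n: "n = card V" using assms by blast+
  have non_adj: "\<forall>v\<in>V. card {u \<in> V - {v}. \<not> E v u} < n - min_degree V E"
    using card_non_neighbours_less[OF G] n by blast
  have "V \<noteq> {}" using assms(2-4) by (cases n) auto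
  then have "min_degree V E \<le> n" using non_adj by fastforce
  note p = min_degree_arith[OF k this assms(5)]
  obtain \<C>\<^sub>0 where cliques: "\<forall>S\<in>\<C>\<^sub>0. is_clique_copy V E (k + 1) S"
    "\<forall>S\<in>\<C>\<^sub>0. \<forall>T\<in>\<C>\<^sub>0. S \<noteq> T \<longrightarrow> S \<inter> T = {}"
    and many: "min (int n - int k * int (n - min_degree V E)) (int (n div (k + 1))) \<le> int (card \<C>\<^sub>0)"
    using many_disjoint_cliques[OF G k non_adj, folded n] by blast
  obtain \<C> where "\<C> \<subseteq> \<C>\<^sub>0"
    and card: "card \<C> = nat (min (int n - int k * int (n - min_degree V E)) (int (n div (k + 1))))"
    using obtain_subset_with_card_n many by (metis nat_le_iff)
  then have "\<forall>S\<in>\<C>. is_clique_copy V E (k + 1) S" "\<forall>S\<in>\<C>. \<forall>T\<in>\<C>. S \<noteq> T \<longrightarrow> S \<inter> T = {}"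
    using cliques by blast+
  moreover have "int (card \<C>) = min (int k * int (min_degree V E) - (int k - 1) * int n) (int (n div (k + 1)))"
    unfolding card p(1) using p(2) by simp
  ultimately show ?thesis by blast
qed

end
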